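(* (Binary case.) Let $({\bf x}_i,y_i)$, $i=1,\dots,n$, with ${\bf x}_i\in\mathbb{R}^p$, $y_i\in\{\pm1\}$, and parameters $\lambda_1\ge0$, $\lambda_2>0$, $\lambda_3>0$, $\delta>0$. Let $F(b,{\bf w})=f(b,{\bf w})+g(b,{\bf w})$ with $f(b,{\bf w})=\frac1n\sum_i\phi_H(y_i(b+{\bf x}_i^\top{\bf w}))$ and $g(b,{\bf w})=\lambda_1\|{\bf w}\|_1+\frac{\lambda_2}{2}\|{\bf w}\|^2+\frac{\lambda_3}{2}b^2$, and let $L_f=\frac{1}{n\delta}\sum_i y_i^2(1+\|{\bf x}_i\|^2)$. Let $\{{\bf u}^k=(b^k;{\bf w}^k)\}$ be generated by the B-PGH scheme: ${\bf u}^{-1}={\bf u}^0$, $L_0\le L_f$, $\eta>1$; at step $k$, $\hat{\bf u}^{k-1}={\bf u}^{k-1}+\omega_{k-1}({\bf u}^{k-1}-{\bf u}^{k-2})$ with $0\le\omega_{k-1}\le\sqrt{L_{k-1}/L_k}$; $L_k=\min(\eta^{n_k}L_{k-1},L_f)$ with $n_k$ the smallest nonnegative integer such that $f(\mathrm{prox}_{g/L_k}({\bf v}^{k-1}))\le f(\hat{\bf u}^{k-1})+\langle\nabla f(\hat{\bf u}^{k-1}),\mathrm{prox}_{g/L_k}({\bf v}^{k-1})-\hat{\bf u}^{k-1}\rangle+\frac{L_k}{2}\|\mathrm{prox}_{g/L_k}({\bf v}^{k-1})-\hat{\bf u}^{k-1}\|^2$, where ${\bf v}^{k-1}=\hat{\bf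 u}^{k-1}-\frac{1}{L_k}\nabla f(\hat{\bf u}^{k-1})$; then $b^k=\frac{L_k\hat b^{k-1}-\nabla_b f(\hat{\bf u}^{k-1})}{L_k+\lambda_3}$, ${\bf w}^k=\frac{1}{L_k+\lambda_2}\mathcal{S}_{\lambda_1}(L_k\hat{\bf w}^{k-1}-\nabla_{\bf w}f(\hat{\bf u}^{k-1}))$; and if $F({\bf u}^k)>F({\bf u}^{k-1})$, ${\bf u}^k$ is recomputed with $\hat{\bf u}^{k-1}={\bf u}^{k-1}$. Then $\{{\bf u}^k\}$ converges R-linearly to the unique minimizer of $F$. (Multi-class case.) Let $y_i\in\{1,\dots,J\}$, $\lambda_1\ge0$, $\lambda_2,\lambda_3>0$, $\delta>0$, let $\ell_M({\bf b},\mathbf{W})=\frac1n\sum_{i}\sum_j a_{ij}\phi_H(b_j+{\bf x}_i^\top{\bf w}_j)$, $G({\bf b},\mathbf{W})=\lambda_1\|\mathbf{W}\|_1+\frac{\lambda_2}{2}\|\mathbf{W}\|_F^2+\frac{\lambda_3}{2}\|{\bf b}\|^2$, $\mathcal{U}=\{({\bf b},\mathbf{W}):\mathbf{W}{\bf e}=\mathbf{0},{\bf e}^\top{\bf b}=0\}$, and let $\{\mathbf{U}^k\}$ be generated by the analogous scheme (M-PGH) for $\min_{\mathbf{U}\in\mathcal{U}}\ell_M+G$, i.e. the iteration of the binary case with $f,g,L_f$ replaced by $\ell_M,G,L_m=\frac{J}{n\delta}\sum_i(1+\|{\bf x}_i\|^2)$ and each proximal step taken as the exact minimizer over $\mathcal{U}$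 of $\langle\nabla\ell_M(\hat{\mathbf{U}}^{k-1}),\mathbf{U}-\hat{\mathbf{U}}^{k-1}\rangle+\frac{L_k}{2}\|\mathbf{U}-\hat{\mathbf{U}}^{k-1}\|^2+G(\mathbf{U})$, with $0\le\omega_{k-1}\le\sqrt{L_{k-1}/L_k}$. Then $\{\mathbf{U}^k\}$ converges R-linearly to the unique minimizer of $\ell_M+G$ over $\mathcal{U}$.
   Context: $\phi_H$ is the huberized hinge loss: $\phi_H(t)=0$ for $t>1$, $\frac{(1-t)^2}{2\delta}$ for $1-\delta<t\le1$, $1-t-\frac\delta2$ for $t\le1-\delta$. $\mathcal{S}_\nu(t)=\mathrm{sign}(t)\max(|t|-\nu,0)$ componentwise. $\mathrm{prox}_h({\bf v})=\arg\min_{\bf u}\frac12\|{\bf u}-{\bf v}\|^2+h({\bf u})$. In the multi-class case $a_{ij}=1$ if $y_i\ne j$ and $0$ otherwise, ${\bf w}_j$ is the $j$-th column of $\mathbf{W}\in\mathbb{R}^{p\times J}$, $\|\mathbf{W}\|_1=\sum_{i,j}|w_{ij}|$, ${\bf e}$ is the all-ones vector. R-linear convergence means $\|{\bf u}^k-{\bf u}^*\|\le C\tau^k$ for some $C>0$, $\tau\in(0,1)$. *)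

theory Defs
  imports "HOL-Analysis.Analysis"
begin

definition phiH :: "real \<Rightarrow> real \<Rightarrow> real" where
  "phiH \<delta> t = (if t > 1 then 0
                else if t > 1 - \<delta> then (1 - t)^2 / (2 * \<delta>)
                else 1 - t - \<delta> / 2)"

definition dphiH :: "real \<Rightarrow> real \<Rightarrow> real" where
  "dphiH \<delta> t = (if t > 1 then 0
                 else if t > 1 - \<delta> then - (1 - t) / \<delta>
                 else -1)"

definition soft :: "real \<Rightarrow> real \<Rightarrow> real" where
  "soft \<nu> t = sgn t * max (\<bar>t\<bar> - \<nu>) 0"

definition softvec :: "real \<Rightarrow> real^'p \<Rightarrow> real^'p" where
  "softvec \<nu> v = (\<chi> j. soft \<nu> (v $ j))"

definition l1norm :: "real^'p \<Rightarrow> real" where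
  "l1norm w = (\<Sum>j\<in>UNIV. \<bar>w $ j\<bar>)"

definition prox :: "('u::real_normed_vector \<Rightarrow> real) \<Rightarrow> 'u \<Rightarrow> 'u" where
  "prox h v = arg_min (\<lambda>u. (1/2) * (norm (u - v))^2 + h u) (\<lambda>_. True)"

definition bt_cond :: "('u::real_inner \<Rightarrow> real) \<Rightarrow> ('u \<Rightarrow> 'u) \<Rightarrow> (real \<Rightarrow> 'u \<Rightarrow> 'u)
    \<Rightarrow> real \<Rightarrow> 'u \<Rightarrow> bool" where
  "bt_cond f gf T L uh \<longleftrightarrow>
     f (T L uh) \<le> f uh + inner (gf uh) (T L uh - uh) + L / 2 * (norm (T L uh - uh))^2"

definition bt_L :: "('u::real_inner \<Rightarrow> real) \<Rightarrow> ('u \<Rightarrow> 'u) \<Rightarrow> (real \<Rightarrow> 'u \<Rightarrow> 'u)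
    \<Rightarrow> real \<Rightarrow> real \<Rightarrow> real \<Rightarrow> 'u \<Rightarrow> real" where
  "bt_L f gf T \<eta> Lf Lp uh =
     min (\<eta> ^ (LEAST m::nat. bt_cond f gf T (min (\<eta> ^ m * Lp) Lf) uh) * Lp) Lf"

text \<open>A run of the scheme: u k is u^k, L k is L_k; u (k - 1) at k = 0 is u 0,
  i.e. u^{-1} = u^0.  Tc is the candidate point used in the line-search test,
  Tu the update formula, F the objective used in the restart test.\<close>
definition pgh_run :: "('u::real_inner \<Rightarrow> real) \<Rightarrow> ('u \<Rightarrow> 'u) \<Rightarrow> ('u \<Rightarrow> real)
    \<Rightarrow> (real \<Rightarrow> 'u \<Rightarrow> 'u) \<Rightarrow> (real \<Rightarrow> 'u \<Rightarrow> 'u) \<Rightarrow> real \<Rightarrow> real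
    \<Rightarrow> (nat \<Rightarrow> real) \<Rightarrow> (nat \<Rightarrow> 'u) \<Rightarrow> bool" where
  "pgh_run f gf F Tc Tu \<eta> Lf L u \<longleftrightarrow>
     (\<forall>k. \<exists>\<omega>. 0 \<le> \<omega> \<and>
        (let uh = u k + \<omega> *\<^sub>R (u k - u (k - 1));
             Lt = bt_L f gf Tc \<eta> Lf (L k) uh;
             ut = Tu Lt uh
         in \<omega> \<le> sqrt (L k / Lt) \<and>
            (if F ut \<le> F (u k)
             then L (Suc k) = Lt \<and> u (Suc k) = ut
             else L (Suc k) = bt_L f gf Tc \<eta> Lf (L k) (u k) \<and>
                  u (Suc k) = Tu (bt_L f gf Tc \<eta> Lf (L k) (u k)) (u k))))"

definition fB :: "nat \<Rightarrow> (nat \<Rightarrow> real^'p) \<Rightarrow> (nat \<Rightarrow> real) \<Rightarrow> real \<Rightarrow> real \<times> (real^'p) \<Rightarrow> real" where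
  "fB n x y \<delta> u = (1 / real n) * (\<Sum>i<n. phiH \<delta> (y i * (fst u + x i \<bullet> snd u)))"

definition gradfB :: "nat \<Rightarrow> (nat \<Rightarrow> real^'p) \<Rightarrow> (nat \<Rightarrow> real) \<Rightarrow> real \<Rightarrow> real \<times> (real^'p)
    \<Rightarrow> real \<times> (real^'p)" where
  "gradfB n x y \<delta> u =
     ((1 / real n) * (\<Sum>i<n. dphiH \<delta> (y i * (fst u + x i \<bullet> snd u)) * y i),
      (1 / real n) *\<^sub>R (\<Sum>i<n. (dphiH \<delta> (y i * (fst u + x i \<bullet> snd u)) * y i) *\<^sub>R x i))"

definition gB :: "real \<Rightarrow> real \<Rightarrow> real \<Rightarrow> real \<times> (real^'p) \<Rightarrow> real" where
  "gB lam1 lam2 lam3 u = lam1 * l1norm (snd u) + lam2 / 2 * (norm (snd u))^2 + lam3 / 2 * (fst u)^2"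

definition LfB :: "nat \<Rightarrow> (nat \<Rightarrow> real^'p) \<Rightarrow> (nat \<Rightarrow> real) \<Rightarrow> real \<Rightarrow> real" where
  "LfB n x y \<delta> = 1 / (real n * \<delta>) * (\<Sum>i<n. (y i)^2 * (1 + (norm (x i))^2))"

definition TcB :: "nat \<Rightarrow> (nat \<Rightarrow> real^'p) \<Rightarrow> (nat \<Rightarrow> real) \<Rightarrow> real \<Rightarrow> real \<Rightarrow> real \<Rightarrow> real
    \<Rightarrow> real \<Rightarrow> real \<times> (real^'p) \<Rightarrow> real \<times> (real^'p)" where
  "TcB n x y \<delta> lam1 lam2 lam3 L uh =
     prox (\<lambda>u. gB lam1 lam2 lam3 u / L) (uh - (1 / L) *\<^sub>R gradfB n x y \<delta> uh)"

definition TuB :: "nat \<Rightarrow> (nat \<Rightarrow> real^'p) \<Rightarrow> (nat \<Rightarrow> real) \<Rightarrow> real \<Rightarrow> real \<Rightarrow> real \<Rightarrow> real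
    \<Rightarrow> real \<Rightarrow> real \<times> (real^'p) \<Rightarrow> real \<times> (real^'p)" where
  "TuB n x y \<delta> lam1 lam2 lam3 L uh =
     ((L * fst uh - fst (gradfB n x y \<delta> uh)) / (L + lam3),
      (1 / (L + lam2)) *\<^sub>R softvec lam1 (L *\<^sub>R snd uh - snd (gradfB n x y \<delta> uh)))"

text \<open>b :: real^'j (J = CARD('j)), W :: real^'j^'p with W $ r $ j the (r,j) entry;
  column j W is w_j.  Labels y i :: 'j.\<close>

definition aM :: "(nat \<Rightarrow> 'j) \<Rightarrow> nat \<Rightarrow> 'j \<Rightarrow> real" where
  "aM y i j = (if y i \<noteq> j then 1 else 0)"

definition ellM :: "nat \<Rightarrow> (nat \<Rightarrow> real^'p) \<Rightarrow> (nat \<Rightarrow> 'j::finite) \<Rightarrow> real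
    \<Rightarrow> (real^'j) \<times> (real^'j^'p) \<Rightarrow> real" where
  "ellM n x y \<delta> U = (1 / real n) *
     (\<Sum>i<n. \<Sum>j\<in>UNIV. aM y i j * phiH \<delta> (fst U $ j + x i \<bullet> column j (snd U)))"

definition gradM :: "nat \<Rightarrow> (nat \<Rightarrow> real^'p) \<Rightarrow> (nat \<Rightarrow> 'j::finite) \<Rightarrow> real
    \<Rightarrow> (real^'j) \<times> (real^'j^'p) \<Rightarrow> (real^'j) \<times> (real^'j^'p)" where
  "gradM n x y \<delta> U =
     ((\<chi> j. (1 / real n) * (\<Sum>i<n. aM y i j * dphiH \<delta> (fst U $ j + x i \<bullet> column j (snd U)))),
      (\<chi> r. \<chi> j. (1 / real n) *
         (\<Sum>i<n. aM y i j * dphiH \<delta> (fst U $ j + x i \<bullet> column j (snd U)) * (x i $ r))))"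

definition GM :: "real \<Rightarrow> real \<Rightarrow> real \<Rightarrow> (real^'j) \<times> (real^'j^'p) \<Rightarrow> real" where
  "GM lam1 lam2 lam3 U = lam1 * (\<Sum>r\<in>UNIV. \<Sum>j\<in>UNIV. \<bar>snd U $ r $ j\<bar>)
     + lam2 / 2 * (norm (snd U))^2 + lam3 / 2 * (norm (fst U))^2"

definition UsetM :: "((real^'j) \<times> (real^'j^'p)) set" where
  "UsetM = {U. snd U *v (\<chi> j. 1) = 0 \<and> (\<chi> j. 1) \<bullet> fst U = 0}"

definition LmM :: "nat \<Rightarrow> (nat \<Rightarrow> real^'p) \<Rightarrow> real \<Rightarrow> nat \<Rightarrow> real" where
  "LmM n x \<delta> J = real J / (real n * \<delta>) * (\<Sum>i<n. 1 + (norm (x i))^2)"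

definition TM :: "nat \<Rightarrow> (nat \<Rightarrow> real^'p) \<Rightarrow> (nat \<Rightarrow> 'j::finite) \<Rightarrow> real \<Rightarrow> real \<Rightarrow> real
    \<Rightarrow> real \<Rightarrow> real \<Rightarrow> (real^'j) \<times> (real^'j^'p) \<Rightarrow> (real^'j) \<times> (real^'j^'p)" where
  "TM n x y \<delta> lam1 lam2 lam3 L Uh =
     arg_min (\<lambda>U. inner (gradM n x y \<delta> Uh) (U - Uh) + L / 2 * (norm (U - Uh))^2 + GM lam1 lam2 lam3 U)
             (\<lambda>U. U \<in> UsetM)"

end

theory Submission
  imports Defs
begin

text \<open>
  The objective F = f + g is the sum of a convex f with Lipschitz gradient (an average of
  huberized hinge losses of linear scores) and a strongly convex g (an elastic net), so it has a
  unique minimizer u*. A prox-gradient step p from v whose step size L passes the line-search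
  test satisfies the three-point inequality
    F p + (L + mu)/2 |z - p|^2 - L/2 |z - v|^2 <= F z    for every feasible z.
  Applied at z = u_k and at z = u*, together with the momentum bound L_(k+1) w_k^2 <= L_k, it
  shows that P_k = F u_(k+1) - F u* + L_(k+1)/2 |u_(k+1) - u_k|^2 decreases by mu/2 times the
  newest squared step and is at most a constant times the last two squared steps. Hence
  P_(k+2) <= q P_k with q < 1, and strong convexity turns this geometric decay of P into
  R-linear convergence of the iterates.
\<close>

section \<open>Strong convexity\<close>

lemma norm_sq_convex_comb:
  fixes a b v :: "'a::real_inner"
  shows "(norm (t *\<^sub>R a + (1 - t) *\<^sub>R b - v))^2
    = t * (norm (a - v))^2 + (1 - t) * (norm (b - v))^2 - t * (1 - t) * (norm (a - b))^2"
proof -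
  have "t *\<^sub>R a + (1 - t) *\<^sub>R b - v = t *\<^sub>R (a - v) + (1 - t) *\<^sub>R (b - v)"
    by (simp add: algebra_simps)
  moreover have "a - b = (a - v) - (b - v)" by simp
  ultimately show ?thesis
    unfolding power2_norm_eq_inner
    by (simp add: inner_diff inner_add inner_commute algebra_simps power2_eq_square)
qed

definition strongly_convex_on :: "'a::real_inner set \<Rightarrow> real \<Rightarrow> ('a \<Rightarrow> real) \<Rightarrow> bool" where
  "strongly_convex_on S \<mu> g \<longleftrightarrow> convex S \<and>
     (\<forall>a\<in>S. \<forall>b\<in>S. \<forall>t. 0 \<le> t \<longrightarrow> t \<le> 1 \<longrightarrow>
        g (t *\<^sub>R a + (1 - t) *\<^sub>R b) \<le> t * g a + (1 - t) * g b - \<mu> / 2 * t * (1 - t) * (norm (a - b))^2)"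

lemma strongly_convex_onD:
  assumes "strongly_convex_on S \<mu> g" "a \<in> S" "b \<in> S" "0 \<le> t" "t \<le> 1"
  shows "g (t *\<^sub>R a + (1 - t) *\<^sub>R b) \<le> t * g a + (1 - t) * g b - \<mu> / 2 * t * (1 - t) * (norm (a - b))^2"
  using assms by (simp add: strongly_convex_on_def)

lemma strongly_convex_on_0_iff: "strongly_convex_on S 0 f \<longleftrightarrow> convex_on S f"
proof
  assume sc: "strongly_convex_on S 0 f"
  show "convex_on S f"
    unfolding convex_on_def
  proof (intro conjI ballI allI impI)
    show "convex S" using sc by (simp add: strongly_convex_on_def)
    fix x y and u v :: real
    assume "x \<in> S" "y \<in> S" "0 \<le> u" "0 \<le> v" "u + v = 1"
    then have "v = 1 - u" by simp
    with \<open>x \<in> S\<close> \<open>y \<in> S\<close> \<open>0 \<le> u\<close> \<open>0 \<le> v\<close>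
    show "f (u *\<^sub>R x + v *\<^sub>R y) \<le> u * f x + v * f y"
      using strongly_convex_onD[OF sc, of x y u] by simp
  qed
next
  assume cvx: "convex_on S f"
  show "strongly_convex_on S 0 f"
    unfolding strongly_convex_on_def
  proof (intro conjI ballI allI impI)
    show "convex S" using cvx by (simp add: convex_on_def)
    fix a b and t :: real assume "a \<in> S" "b \<in> S" "0 \<le> t" "t \<le> 1"
    then show "f (t *\<^sub>R a + (1 - t) *\<^sub>R b) \<le> t * f a + (1 - t) * f b - 0 / 2 * t * (1 - t) * (norm (a - b))^2"
      using convex_onD[OF cvx, of t b a] by (simp add: add.commute)
  qed
qed

lemma strongly_convex_on_add:
  assumes f: "strongly_convex_on S \<mu> f" and g: "strongly_convex_on S \<nu> g"
  shows "strongly_convex_on S (\<mu> + \<nu>) (\<lambda>x. f x + g x)"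
  unfolding strongly_convex_on_def
proof (intro conjI ballI allI impI)
  show "convex S" using f by (simp add: strongly_convex_on_def)
  fix a b and t :: real assume abt: "a \<in> S" "b \<in> S" "0 \<le> t" "t \<le> 1"
  have "(\<mu> + \<nu>) / 2 * t * (1 - t) * (norm (a - b))^2
      = \<mu> / 2 * t * (1 - t) * (norm (a - b))^2 + \<nu> / 2 * t * (1 - t) * (norm (a - b))^2"
    by (simp add: add_divide_distrib distrib_right)
  then show "f (t *\<^sub>R a + (1 - t) *\<^sub>R b) + g (t *\<^sub>R a + (1 - t) *\<^sub>R b)
      \<le> t * (f a + g a) + (1 - t) * (f b + g b) - (\<mu> + \<nu>) / 2 * t * (1 - t) * (norm (a - b))^2"
    using strongly_convex_onD[OF f abt] strongly_convex_onD[OF g abt]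
    by (simp only: distrib_left)
qed

lemma strongly_convex_on_subset:
  "strongly_convex_on S \<mu> g \<Longrightarrow> T \<subseteq> S \<Longrightarrow> convex T \<Longrightarrow> strongly_convex_on T \<mu> g"
  by (auto simp: strongly_convex_on_def)

lemma strongly_convex_on_imp_convex_on:
  assumes sc: "strongly_convex_on S \<mu> g" and "0 \<le> \<mu>"
  shows "convex_on S g"
  unfolding strongly_convex_on_0_iff[symmetric] strongly_convex_on_def
proof (intro conjI ballI allI impI)
  show "convex S" using sc by (simp add: strongly_convex_on_def)
  fix a b and t :: real assume "a \<in> S" "b \<in> S" "0 \<le> t" "t \<le> 1"
  moreover from this have "0 \<le> \<mu> / 2 * t * (1 - t) * (norm (a - b))^2"
    using \<open>0 \<le> \<mu>\<close> by simp
  ultimately show "g (t *\<^sub>R a + (1 - t) *\<^sub>R b) \<le> t * g a + (1 - t) * g b - 0 / 2 * t * (1 - t) * (norm (a - b))^2"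
    using strongly_convex_onD[OF sc, of a b t] by simp
qed

lemma strongly_convex_on_linear_plus_norm_sq:
  fixes c v :: "'a::real_inner"
  shows "strongly_convex_on UNIV L (\<lambda>z. inner c (z - v) + L / 2 * (norm (z - v))^2)"
  unfolding strongly_convex_on_def
proof (intro conjI ballI allI impI)
  fix a b and t :: real
  have "inner c (t *\<^sub>R a + (1 - t) *\<^sub>R b - v) = t * inner c (a - v) + (1 - t) * inner c (b - v)"
    by (simp add: inner_diff_right inner_add_right algebra_simps)
  then show "inner c (t *\<^sub>R a + (1 - t) *\<^sub>R b - v) + L / 2 * (norm (t *\<^sub>R a + (1 - t) *\<^sub>R b - v))^2
      \<le> t * (inner c (a - v) + L / 2 * (norm (a - v))^2) + (1 - t) * (inner c (b - v) + L / 2 * (norm (b - v))^2)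
         - L / 2 * t * (1 - t) * (norm (a - b))^2"
    unfolding norm_sq_convex_comb by (simp add: field_simps)
qed simp

lemma strongly_convex_on_minimizer_growth:
  assumes sc: "strongly_convex_on S \<mu> \<phi>" and "0 \<le> \<mu>"
    and m: "m \<in> S" "\<And>w. w \<in> S \<Longrightarrow> \<phi> m \<le> \<phi> w" and z: "z \<in> S"
  shows "\<phi> m + \<mu> / 2 * (norm (z - m))^2 \<le> \<phi> z"
proof -
  define A where "A = \<phi> z - \<phi> m"
  define B where "B = \<mu> / 2 * (norm (z - m))^2"
  have "B \<ge> 0" using \<open>0 \<le> \<mu>\<close> by (simp add: B_def)
  \<comment> \<open>comparing \<phi> m with \<phi> at t z + (1 - t) m and letting t \<rightarrow> 0\<close>
  have key: "(1 - t) * B \<le> A" if t: "0 < t" "t < 1" for t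
  proof -
    have "t *\<^sub>R z + (1 - t) *\<^sub>R m \<in> S"
      using sc z m(1) t by (simp add: strongly_convex_on_def convex_def)
    then have "\<phi> m \<le> \<phi> (t *\<^sub>R z + (1 - t) *\<^sub>R m)" by (rule m(2))
    also have "\<dots> \<le> t * \<phi> z + (1 - t) * \<phi> m - \<mu> / 2 * t * (1 - t) * (norm (z - m))^2"
      using strongly_convex_onD[OF sc z m(1)] t by simp
    finally have "t * ((1 - t) * B) \<le> t * A" by (simp add: A_def B_def algebra_simps)
    then show ?thesis using t by simp
  qed
  show ?thesis
  proof (rule ccontr)
    assume "\<not> ?thesis"
    then have "A < B" by (simp add: A_def B_def)
    moreover have "0 \<le> A" using key[of "1/2"] \<open>B \<ge> 0\<close> by simp
    ultimately have "(1 - (B - A) / (2 * B)) * B = (A + B) / 2" "0 < (B - A) / (2 * B)" "(B - A) / (2 * B) < 1"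
      by (auto simp: field_simps)
    with key[of "(B - A) / (2 * B)"] \<open>A < B\<close> show False by simp
  qed
qed

definition prox_model :: "('u::real_inner \<Rightarrow> 'u) \<Rightarrow> ('u \<Rightarrow> real) \<Rightarrow> real \<Rightarrow> 'u \<Rightarrow> 'u \<Rightarrow> real" where
  "prox_model gf g L v z = inner (gf v) (z - v) + L / 2 * (norm (z - v))^2 + g z"

lemma strongly_convex_on_prox_model:
  assumes "strongly_convex_on S \<mu> g"
  shows "strongly_convex_on S (L + \<mu>) (prox_model gf g L v)"
proof -
  have "convex S" using assms by (simp add: strongly_convex_on_def)
  then have "strongly_convex_on S L (\<lambda>z. inner (gf v) (z - v) + L / 2 * (norm (z - v))^2)"
    by (rule strongly_convex_on_subset[OF strongly_convex_on_linear_plus_norm_sq subset_UNIV])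
  from strongly_convex_on_add[OF this assms] show ?thesis
    unfolding prox_model_def[abs_def] .
qed

lemma norm_prod_sq: "(norm x)^2 = (norm (fst x))^2 + (norm (snd x))^2"
  by (simp add: norm_prod_def)

lemma norm_vec_sq: "(norm (v::'a::real_normed_vector^'n))^2 = (\<Sum>j\<in>UNIV. (norm (v $ j))^2)"
  by (simp add: norm_vec_def L2_set_def sum_nonneg)

lemma convex_on_sum_abs_linear:
  assumes "\<And>i. i \<in> I \<Longrightarrow> linear (lin i)"
  shows "convex_on UNIV (\<lambda>x. \<Sum>i\<in>I. \<bar>lin i x\<bar>)"
proof (rule convex_onI)
  fix t :: real and x y assume "0 < t" "t < 1"
  then have "\<bar>lin i ((1 - t) *\<^sub>R x + t *\<^sub>R y)\<bar> \<le> (1 - t) * \<bar>lin i x\<bar> + t * \<bar>lin i y\<bar>" if "i \<in> I" for i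
    using abs_triangle_ineq[of "(1 - t) * lin i x" "t * lin i y"]
    by (simp add: linear_add[OF assms[OF that]] linear_scale[OF assms[OF that]] abs_mult)
  then show "(\<Sum>i\<in>I. \<bar>lin i ((1 - t) *\<^sub>R x + t *\<^sub>R y)\<bar>) \<le> (1 - t) * (\<Sum>i\<in>I. \<bar>lin i x\<bar>) + t * (\<Sum>i\<in>I. \<bar>lin i y\<bar>)"
    by (simp add: sum_distrib_left sum.distrib[symmetric] sum_mono)
qed simp

lemma strongly_convex_on_weighted_norm_sq:
  "strongly_convex_on UNIV (min lam2 lam3)
    (\<lambda>u::'a::real_inner \<times> 'b::real_inner. lam2 / 2 * (norm (snd u))^2 + lam3 / 2 * (norm (fst u))^2)"
  unfolding strongly_convex_on_def
proof (intro conjI ballI allI impI)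
  fix a b :: "'a \<times> 'b" and t :: real assume "0 \<le> t" "t \<le> 1"
  define Ds where "Ds = (norm (snd a - snd b))^2"
  define Df where "Df = (norm (fst a - fst b))^2"
  have "min lam2 lam3 * (norm (a - b))^2 \<le> lam2 * Ds + lam3 * Df"
    unfolding norm_prod_sq[of "a - b"] Ds_def Df_def
    using mult_right_mono[OF min.cobounded1, of "(norm (snd a - snd b))^2" lam2 lam3]
      mult_right_mono[OF min.cobounded2, of "(norm (fst a - fst b))^2" lam2 lam3]
    by (simp add: distrib_left)
  then have "t * (1 - t) * (min lam2 lam3 * (norm (a - b))^2) \<le> t * (1 - t) * (lam2 * Ds + lam3 * Df)"
    using \<open>0 \<le> t\<close> \<open>t \<le> 1\<close> by (intro mult_left_mono) auto
  moreover have "lam2 / 2 * (norm (snd (t *\<^sub>R a + (1 - t) *\<^sub>R b)))^2 + lam3 / 2 * (norm (fst (t *\<^sub>R a + (1 - t) *\<^sub>R b)))^2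
    = t * (lam2 / 2 * (norm (snd a))^2 + lam3 / 2 * (norm (fst a))^2)
       + (1 - t) * (lam2 / 2 * (norm (snd b))^2 + lam3 / 2 * (norm (fst b))^2)
       - t * (1 - t) * (lam2 * Ds + lam3 * Df) / 2"
    unfolding snd_add snd_scaleR fst_add fst_scaleR
      norm_sq_convex_comb[of t "snd a" "snd b" 0, unfolded diff_zero, folded Ds_def]
      norm_sq_convex_comb[of t "fst a" "fst b" 0, unfolded diff_zero, folded Df_def]
    by (simp add: field_simps)
  ultimately show "lam2 / 2 * (norm (snd (t *\<^sub>R a + (1 - t) *\<^sub>R b)))^2 + lam3 / 2 * (norm (fst (t *\<^sub>R a + (1 - t) *\<^sub>R b)))^2
    \<le> t * (lam2 / 2 * (norm (snd a))^2 + lam3 / 2 * (norm (fst a))^2)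
       + (1 - t) * (lam2 / 2 * (norm (snd b))^2 + lam3 / 2 * (norm (fst b))^2)
       - min lam2 lam3 / 2 * t * (1 - t) * (norm (a - b))^2"
    by (simp add: mult_ac)
qed simp

lemma strongly_convex_on_elastic_net:
  fixes h :: "'b::real_inner \<Rightarrow> real"
  assumes "convex_on UNIV h" "0 \<le> lam1"
  shows "strongly_convex_on UNIV (min lam2 lam3)
    (\<lambda>u::'a::real_inner \<times> 'b. lam1 * h (snd u) + lam2 / 2 * (norm (snd u))^2 + lam3 / 2 * (norm (fst u))^2)"
proof -
  have "convex_on UNIV (\<lambda>u::'a \<times> 'b. lam1 * h (snd u))"
  proof (rule convex_onI)
    fix t :: real and x y :: "'a \<times> 'b" assume "0 < t" "t < 1"
    then show "lam1 * h (snd ((1 - t) *\<^sub>R x + t *\<^sub>R y)) \<le> (1 - t) * (lam1 * h (snd x)) + t * (lam1 * h (snd y))"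
      using mult_left_mono[OF convex_onD[OF assms(1), of t "snd x" "snd y"] assms(2)]
      by (simp add: algebra_simps)
  qed simp
  moreover have "strongly_convex_on UNIV (min lam2 lam3)
      (\<lambda>u::'a \<times> 'b. lam2 / 2 * (norm (snd u))^2 + lam3 / 2 * (norm (fst u))^2)"
    by (rule strongly_convex_on_weighted_norm_sq)
  ultimately show ?thesis
    using strongly_convex_on_add[of UNIV 0] by (simp add: strongly_convex_on_0_iff add.assoc)
qed

lemma elastic_net_lower_bound:
  assumes "0 \<le> lam1" "0 \<le> h (snd u)"
  shows "min lam2 lam3 / 2 * (norm u)^2 \<le> lam1 * h (snd u) + lam2 / 2 * (norm (snd u))^2 + lam3 / 2 * (norm (fst u))^2"
  using mult_right_mono[OF min.cobounded1, of "(norm (snd u))^2" lam2 lam3]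
    mult_right_mono[OF min.cobounded2, of "(norm (fst u))^2" lam2 lam3] mult_nonneg_nonneg[OF assms]
  by (simp add: norm_prod_sq[of u] field_simps)

section \<open>Proximal gradient steps\<close>

lemma prox_grad_three_point:
  assumes gradient_ineq: "f v + inner (gf v) (z - v) \<le> f z"
    and sc: "strongly_convex_on S \<mu> g" and "0 \<le> \<mu>" and "0 \<le> L"
    and p: "p \<in> S" "\<And>w. w \<in> S \<Longrightarrow> prox_model gf g L v p \<le> prox_model gf g L v w"
    and decrease: "f p \<le> f v + inner (gf v) (p - v) + L / 2 * (norm (p - v))^2"
    and z: "z \<in> S"
  shows "f p + g p + (L + \<mu>) / 2 * (norm (z - p))^2 - L / 2 * (norm (z - v))^2 \<le> f z + g z"
proof -
  have "prox_model gf g L v p + (L + \<mu>) / 2 * (norm (z - p))^2 \<le> prox_model gf g L v z"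
    using strongly_convex_on_minimizer_growth[OF strongly_convex_on_prox_model[OF sc] _ p z]
      \<open>0 \<le> \<mu>\<close> \<open>0 \<le> L\<close> by simp
  with gradient_ineq decrease show ?thesis unfolding prox_model_def by linarith
qed

lemma bt_L_bounds:
  assumes "1 < \<eta>" "0 < Lp" "Lp \<le> Lf" and cond_Lf: "bt_cond f gf Tc Lf v"
  shows "Lp \<le> bt_L f gf Tc \<eta> Lf Lp v" "bt_L f gf Tc \<eta> Lf Lp v \<le> Lf"
    "bt_cond f gf Tc (bt_L f gf Tc \<eta> Lf Lp v) v"
proof -
  define P where "P m \<longleftrightarrow> bt_cond f gf Tc (min (\<eta> ^ m * Lp) Lf) v" for m
  obtain m where "Lf / Lp < \<eta> ^ m" using real_arch_pow[OF \<open>1 < \<eta>\<close>] by blast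
  then have "min (\<eta> ^ m * Lp) Lf = Lf" using \<open>0 < Lp\<close> by (simp add: field_simps)
  then have "P m" using cond_Lf by (simp add: P_def)
  define M where "M = (LEAST m. P m)"
  have "P M" unfolding M_def by (rule LeastI) fact
  moreover have "Lp \<le> \<eta> ^ M * Lp" using assms by simp
  moreover have "bt_L f gf Tc \<eta> Lf Lp v = min (\<eta> ^ M * Lp) Lf"
    by (simp add: bt_L_def P_def M_def)
  ultimately show "Lp \<le> bt_L f gf Tc \<eta> Lf Lp v" "bt_L f gf Tc \<eta> Lf Lp v \<le> Lf"
    "bt_cond f gf Tc (bt_L f gf Tc \<eta> Lf Lp v) v"
    using assms by (simp_all add: P_def)
qed

lemma continuous_attains_inf_quadratic_growth:
  fixes \<phi> :: "'a::euclidean_space \<Rightarrow> real"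
  assumes cont: "continuous_on UNIV \<phi>" and "closed S" "S \<noteq> {}"
    and growth: "\<And>z. a * (norm z)^2 - b * norm z - c \<le> \<phi> z" and "0 < a"
  shows "\<exists>m\<in>S. \<forall>w\<in>S. \<phi> m \<le> \<phi> w"
proof -
  obtain s where s: "s \<in> S" using \<open>S \<noteq> {}\<close> by blast
  define K where "K = S \<inter> {z. \<phi> z \<le> \<phi> s}"
  define R where "R = max 1 ((\<bar>b\<bar> + \<bar>c + \<phi> s\<bar>) / a)"
  have "norm z \<le> R" if "z \<in> K" for z
  proof (rule ccontr)
    assume "\<not> norm z \<le> R"
    then have "1 < norm z" "(\<bar>b\<bar> + \<bar>c + \<phi> s\<bar>) / a < norm z"
      by (simp_all add: R_def)
    then have "1 < norm z" "\<bar>b\<bar> + \<bar>c + \<phi> s\<bar> < a * norm z"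
      using \<open>0 < a\<close> by (simp_all add: pos_divide_less_eq mult.commute)
    then have "(\<bar>b\<bar> + \<bar>c + \<phi> s\<bar>) * norm z < (a * norm z) * norm z"
      by (intro mult_strict_right_mono) auto
    then have "(\<bar>b\<bar> + \<bar>c + \<phi> s\<bar>) * norm z < a * (norm z)^2"
      by (simp add: power2_eq_square mult.assoc)
    moreover have "c + \<phi> s \<le> \<bar>c + \<phi> s\<bar> * norm z"
      using \<open>1 < norm z\<close> mult_left_mono[of 1 "norm z" "\<bar>c + \<phi> s\<bar>"] abs_ge_self[of "c + \<phi> s"]
      by simp
    moreover have "b * norm z \<le> \<bar>b\<bar> * norm z" by (simp add: mult_right_mono)
    moreover have "a * (norm z)^2 - b * norm z - c \<le> \<phi> s"
      using growth[of z] that by (simp add: K_def)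
    ultimately show False by (simp add: distrib_right)
  qed
  moreover have "closed K"
    unfolding K_def by (intro closed_Int \<open>closed S\<close> closed_Collect_le cont continuous_on_const)
  ultimately have "compact K" by (auto simp: compact_eq_bounded_closed bounded_iff)
  moreover have "K \<noteq> {}" using s by (auto simp: K_def)
  ultimately obtain m where m: "m \<in> K" "\<forall>y\<in>K. \<phi> m \<le> \<phi> y"
    using continuous_attains_inf[OF _ _ continuous_on_subset[OF cont subset_UNIV]] by blast
  have "\<phi> m \<le> \<phi> s" using m(2) s by (simp add: K_def)
  then have "\<phi> m \<le> \<phi> w" if "w \<in> S" for w
    using m(2) that by (cases "\<phi> w \<le> \<phi> s") (auto simp: K_def)
  with m show ?thesis by (auto simp: K_def)
qed

lemma prox_model_arg_min:
  fixes g :: "'u::euclidean_space \<Rightarrow> real"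
  assumes sc: "strongly_convex_on UNIV \<mu> g" and lower: "\<And>z. \<mu> / 2 * (norm z)^2 \<le> g z"
    and "0 < \<mu>" "0 \<le> L" "closed S" "S \<noteq> {}"
  shows "arg_min (prox_model gf g L v) (\<lambda>z. z \<in> S) \<in> S \<and>
    (\<forall>z\<in>S. prox_model gf g L v (arg_min (prox_model gf g L v) (\<lambda>z. z \<in> S)) \<le> prox_model gf g L v z)"
proof -
  have "continuous_on UNIV (prox_model gf g L v)"
    using strongly_convex_on_imp_convex_on[OF strongly_convex_on_prox_model[OF sc]] \<open>0 < \<mu>\<close> \<open>0 \<le> L\<close>
    by (intro convex_on_continuous) auto
  moreover have "\<mu> / 2 * (norm z)^2 - norm (gf v) * norm z - norm (gf v) * norm v \<le> prox_model gf g L v z" for z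
  proof -
    have "- inner (gf v) (z - v) \<le> norm (gf v) * norm (z - v)"
      using Cauchy_Schwarz_ineq2[of "gf v" "z - v"] by simp
    also have "\<dots> \<le> norm (gf v) * norm z + norm (gf v) * norm v"
      using norm_triangle_ineq4[of z v] by (simp add: mult_left_mono flip: distrib_left)
    moreover have "0 \<le> L / 2 * (norm (z - v))^2" using \<open>0 \<le> L\<close> by simp
    ultimately show ?thesis using lower[of z] unfolding prox_model_def by linarith
  qed
  ultimately obtain m where m: "m \<in> S" "\<forall>z\<in>S. prox_model gf g L v m \<le> prox_model gf g L v z"
    using continuous_attains_inf_quadratic_growth[of "prox_model gf g L v" S "\<mu> / 2"] assms
    by (metis half_gt_zero)
  show ?thesis
  proof (rule arg_minI[where P = "\<lambda>z. z \<in> S"])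
    show "\<not> prox_model gf g L v y < prox_model gf g L v m" if "y \<in> S" for y
      using m(2) that by (simp add: not_less)
  qed (use m in \<open>auto simp: not_less\<close>)
qed

lemma prox_eq_prox_model_minimizer:
  assumes sc: "strongly_convex_on UNIV \<mu> g" and "0 \<le> \<mu>" "0 < L"
    and p_min: "\<And>z. prox_model gf g L v p \<le> prox_model gf g L v z"
  shows "prox (\<lambda>u. g u / L) (v - (1 / L) *\<^sub>R gf v) = p"
proof -
  define P where "P u = 1 / 2 * (norm (u - (v - (1 / L) *\<^sub>R gf v)))^2 + g u / L" for u
  have P_eq: "P u = prox_model gf g L v u / L + 1 / 2 * (norm ((1 / L) *\<^sub>R gf v))^2" for u
  proof -
    have "(norm (u - v + (1 / L) *\<^sub>R gf v))^2
        = (norm (u - v))^2 + 2 * inner (gf v) (u - v) / L + (norm ((1 / L) *\<^sub>R gf v))^2"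
      unfolding power2_norm_eq_inner by (simp add: inner_add inner_commute)
    then show ?thesis using \<open>0 < L\<close> by (simp add: P_def prox_model_def field_simps)
  qed
  define m where "m = prox (\<lambda>u. g u / L) (v - (1 / L) *\<^sub>R gf v)"
  have "P m = P p"
    unfolding m_def prox_def P_def[symmetric]
  proof (rule arg_min_equality)
    show "P p \<le> P z" for z
      using divide_right_mono[OF p_min[of z], of L] \<open>0 < L\<close> by (simp add: P_eq)
  qed simp
  then have "prox_model gf g L v m = prox_model gf g L v p" using \<open>0 < L\<close> by (simp add: P_eq)
  moreover have "prox_model gf g L v p + (L + \<mu>) / 2 * (norm (m - p))^2 \<le> prox_model gf g L v m"
    using strongly_convex_on_minimizer_growth[OF strongly_convex_on_prox_model[OF sc]] p_min
      \<open>0 \<le> \<mu>\<close> \<open>0 < L\<close> by simp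
  ultimately have "(L + \<mu>) / 2 * (norm (m - p))^2 \<le> 0" by simp
  then show ?thesis using \<open>0 \<le> \<mu>\<close> \<open>0 < L\<close> by (simp add: m_def mult_le_0_iff)
qed

section \<open>R-linear convergence of the accelerated scheme\<close>

lemma norm_add_sq_le:
  fixes a b :: "'a::real_normed_vector"
  assumes "0 < e"
  shows "(norm (a + b))^2 \<le> (1 + e) * (norm a)^2 + (1 + 1 / e) * (norm b)^2"
proof -
  have "0 \<le> (e * norm a - norm b)^2 / e" using assms by simp
  then have "2 * norm a * norm b \<le> e * (norm a)^2 + (norm b)^2 / e"
    using assms by (simp add: power2_eq_square field_simps)
  moreover have "(norm (a + b))^2 \<le> (norm a + norm b)^2"
    by (simp add: norm_triangle_ineq power_mono)
  ultimately show ?thesis by (simp add: power2_eq_square algebra_simps)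
qed

lemma geometric_decay_of_lyapunov:
  fixes P D :: "nat \<Rightarrow> real"
  assumes D_nonneg: "\<And>j. 0 \<le> D j" and P_nonneg: "\<And>j. 0 \<le> P j"
    and decrease: "\<And>j. P (Suc j) \<le> P j - c * D (Suc j)"
    and bound: "\<And>j. P (Suc j) \<le> C * (D (Suc j) + D j)"
    and "0 < c" "0 < C"
  shows "\<exists>M q. 0 < q \<and> q < 1 \<and> 0 \<le> M \<and> (\<forall>j. P j \<le> M * q ^ j)"
proof -
  define q where "q = sqrt (C / (C + c))"
  have q: "0 < q" "q < 1" "q^2 = C / (C + c)"
    using \<open>0 < c\<close> \<open>0 < C\<close> by (auto simp: q_def)
  have two_step: "P (Suc (Suc j)) \<le> q^2 * P j" for j
  proof -
    have "c * P (Suc (Suc j)) \<le> C * (c * (D (Suc (Suc j)) + D (Suc j)))"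
      using mult_left_mono[OF bound[of "Suc j"], of c] \<open>0 < c\<close> by (simp add: algebra_simps)
    also have "\<dots> \<le> C * (P j - P (Suc (Suc j)))"
      using decrease[of j] decrease[of "Suc j"] \<open>0 < C\<close> by (intro mult_left_mono) (auto simp: algebra_simps)
    finally have "(C + c) * P (Suc (Suc j)) \<le> C * P j" by (simp add: algebra_simps)
    then have "P (Suc (Suc j)) \<le> C * P j / (C + c)"
      using \<open>0 < c\<close> \<open>0 < C\<close> by (simp add: le_divide_eq algebra_simps)
    then show ?thesis by (simp add: q(3))
  qed
  have P_mono: "P (Suc j) \<le> P j" for j
    using decrease[of j] D_nonneg[of "Suc j"] \<open>0 < c\<close> by (smt (verit) mult_nonneg_nonneg)
  define M where "M = P 0 / q"
  have "P j \<le> M * q ^ j \<and> P (Suc j) \<le> M * q ^ Suc j" for j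
  proof (induction j)
    case 0
    have "P 0 \<le> P 0 / q" using q P_nonneg[of 0] by (simp add: le_divide_eq mult_left_le)
    then show ?case using P_mono[of 0] q by (simp add: M_def)
  next
    case (Suc j)
    have "P (Suc (Suc j)) \<le> q^2 * (M * q ^ j)"
      using two_step[of j] Suc.IH q by (smt (verit) mult_left_mono zero_le_power2)
    then show ?case using Suc.IH by (simp add: power2_eq_square mult_ac)
  qed
  moreover have "0 \<le> M" using P_nonneg[of 0] q by (simp add: M_def)
  ultimately show ?thesis using q by blast
qed

locale composite_minimization =
  fixes f g :: "'u::euclidean_space \<Rightarrow> real" and gf :: "'u \<Rightarrow> 'u"
    and S :: "'u set" and Lf \<mu> :: real and T :: "real \<Rightarrow> 'u \<Rightarrow> 'u"
  assumes gradient_ineq: "\<And>z w. f w + inner (gf w) (z - w) \<le> f z"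
    and descent_ineq: "\<And>z w. f z \<le> f w + inner (gf w) (z - w) + Lf / 2 * (norm (z - w))^2"
    and g_strongly_convex: "strongly_convex_on UNIV \<mu> g"
    and g_lower_bound: "\<And>z. \<mu> / 2 * (norm z)^2 \<le> g z"
    and mu_pos: "0 < \<mu>"
    and S: "convex S" "closed S" "S \<noteq> {}"
    and T_in_S: "\<And>L v. 0 < L \<Longrightarrow> T L v \<in> S"
    and T_minimizes: "\<And>L v z. 0 < L \<Longrightarrow> z \<in> S \<Longrightarrow> prox_model gf g L v (T L v) \<le> prox_model gf g L v z"
begin

lemma f_convex: "convex_on UNIV f"
proof
  fix t :: real and x y :: 'u
  define m where "m = (1 - t) *\<^sub>R x + t *\<^sub>R y"
  have "(1 - t) * inner (gf m) (x - m) + t * inner (gf m) (y - m) = inner (gf m) ((1 - t) *\<^sub>R (x - m) + t *\<^sub>R (y - m))"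
    by (simp add: inner_add_right)
  also have "(1 - t) *\<^sub>R (x - m) + t *\<^sub>R (y - m) = 0" by (simp add: m_def algebra_simps)
  finally have "(1 - t) * (f m + inner (gf m) (x - m)) + t * (f m + inner (gf m) (y - m)) = f m"
    by (simp add: algebra_simps)
  moreover assume "0 < t" "t < 1"
  then have "(1 - t) * (f m + inner (gf m) (x - m)) + t * (f m + inner (gf m) (y - m)) \<le> (1 - t) * f x + t * f y"
    by (intro add_mono mult_left_mono gradient_ineq) auto
  ultimately show "f ((1 - t) *\<^sub>R x + t *\<^sub>R y) \<le> (1 - t) * f x + t * f y" by (simp add: m_def)
qed simp

lemma objective_strongly_convex: "strongly_convex_on UNIV \<mu> (\<lambda>z. f z + g z)"
  using strongly_convex_on_add[OF f_convex[folded strongly_convex_on_0_iff] g_strongly_convex] by simp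

lemma exists_minimizer: "\<exists>us\<in>S. \<forall>v\<in>S. f us + g us \<le> f v + g v"
proof (rule continuous_attains_inf_quadratic_growth[OF _ S(2,3)])
  show "continuous_on UNIV (\<lambda>z. f z + g z)"
    using strongly_convex_on_imp_convex_on[OF objective_strongly_convex] mu_pos
    by (intro convex_on_continuous) auto
  show "\<mu> / 2 * (norm z)^2 - norm (gf 0) * norm z - (- f 0) \<le> f z + g z" for z
    using gradient_ineq[where w = 0 and z = z] abs_le_D2[OF Cauchy_Schwarz_ineq2[of "gf 0" z]]
      g_lower_bound[of z]
    by simp
qed (use mu_pos in simp)

lemma minimizer_growth:
  assumes "us \<in> S" "\<And>v. v \<in> S \<Longrightarrow> f us + g us \<le> f v + g v" "z \<in> S"
  shows "f us + g us + \<mu> / 2 * (norm (z - us))^2 \<le> f z + g z"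
  using strongly_convex_on_minimizer_growth[OF strongly_convex_on_subset[OF objective_strongly_convex
      subset_UNIV S(1)]] mu_pos assms by simp

lemma minimizer_unique:
  assumes "us \<in> S" "\<And>v. v \<in> S \<Longrightarrow> f us + g us \<le> f v + g v"
    and "v \<in> S" "\<And>z. z \<in> S \<Longrightarrow> f v + g v \<le> f z + g z"
  shows "v = us"
proof -
  have "\<mu> / 2 * (norm (v - us))^2 \<le> 0"
    using minimizer_growth[OF assms(1,2,3)] assms(4)[OF assms(1)] by simp
  then show ?thesis using mu_pos by (simp add: mult_le_0_iff)
qed

lemma run_step:
  assumes "1 < \<eta>" and Tc: "\<And>L v. 0 < L \<Longrightarrow> Tc L v = T L v"
    and run: "pgh_run f gf (\<lambda>z. f z + g z) Tc T \<eta> Lf L u"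
    and "0 < L k" "L k \<le> Lf"
  shows "\<exists>\<omega>. L k \<le> L (Suc k) \<and> L (Suc k) \<le> Lf \<and> L (Suc k) * \<omega>^2 \<le> L k \<and>
    u (Suc k) = T (L (Suc k)) (u k + \<omega> *\<^sub>R (u k - u (k - 1))) \<and>
    bt_cond f gf T (L (Suc k)) (u k + \<omega> *\<^sub>R (u k - u (k - 1)))"
proof -
  define Lbt where "Lbt v = bt_L f gf Tc \<eta> Lf (L k) v" for v
  have bt: "L k \<le> Lbt v \<and> Lbt v \<le> Lf \<and> bt_cond f gf T (Lbt v) v" for v
  proof -
    have "bt_cond f gf Tc Lf v" unfolding bt_cond_def by (rule descent_ineq)
    from bt_L_bounds[OF \<open>1 < \<eta>\<close> \<open>0 < L k\<close> \<open>L k \<le> Lf\<close> this] \<open>0 < L k\<close> show ?thesis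
      by (simp add: Lbt_def bt_cond_def Tc)
  qed
  obtain \<omega> where "0 \<le> \<omega>" and step: "let uh = u k + \<omega> *\<^sub>R (u k - u (k - 1));
      Lt = bt_L f gf Tc \<eta> Lf (L k) uh; ut = T Lt uh
    in \<omega> \<le> sqrt (L k / Lt) \<and>
       (if f ut + g ut \<le> f (u k) + g (u k) then L (Suc k) = Lt \<and> u (Suc k) = ut
        else L (Suc k) = bt_L f gf Tc \<eta> Lf (L k) (u k) \<and>
             u (Suc k) = T (bt_L f gf Tc \<eta> Lf (L k) (u k)) (u k))"
    using run unfolding pgh_run_def by blast
  define uh where "uh = u k + \<omega> *\<^sub>R (u k - u (k - 1))"
  from step have "\<omega> \<le> sqrt (L k / Lbt uh)"
    and "L (Suc k) = Lbt uh \<and> u (Suc k) = T (L (Suc k)) uh \<or>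
      L (Suc k) = Lbt (u k) \<and> u (Suc k) = T (L (Suc k)) (u k)"
    by (auto simp: Let_def uh_def Lbt_def split: if_splits)
  then consider "\<omega> \<le> sqrt (L k / L (Suc k))" "L (Suc k) = Lbt uh" "u (Suc k) = T (L (Suc k)) uh"
    | "L (Suc k) = Lbt (u k)" "u (Suc k) = T (L (Suc k)) (u k)"
    by fastforce
  then show ?thesis
  proof cases
    case 1
    with bt[of uh] \<open>0 < L k\<close> have "0 < L (Suc k)" by simp
    with 1 \<open>0 \<le> \<omega>\<close> \<open>0 < L k\<close> have "\<omega>^2 \<le> L k / L (Suc k)"
      by (metis power_mono real_sqrt_pow2 less_eq_real_def divide_nonneg_pos)
    with \<open>0 < L (Suc k)\<close> have "L (Suc k) * \<omega>^2 \<le> L k" by (simp add: field_simps)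
    with 1 bt[of uh] show ?thesis by (intro exI[of _ \<omega>]) (simp add: uh_def)
  next
    case 2 \<comment> \<open>a restart is an extrapolation step with \<omega> = 0\<close>
    with bt[of "u k"] \<open>0 < L k\<close> show ?thesis by (intro exI[of _ 0]) simp
  qed
qed

lemma run_iterates:
  assumes "1 < \<eta>" and Tc: "\<And>L v. 0 < L \<Longrightarrow> Tc L v = T L v"
    and run: "pgh_run f gf (\<lambda>z. f z + g z) Tc T \<eta> Lf L u"
    and "0 < L 0" "L 0 \<le> Lf"
  obtains \<omega> where "\<And>k. 0 < L k" "\<And>k. L k \<le> Lf" "\<And>k. L k \<le> L (Suc k)"
    "\<And>k. L (Suc k) * (\<omega> k)^2 \<le> L k"
    "\<And>k. u (Suc k) = T (L (Suc k)) (u k + \<omega> k *\<^sub>R (u k - u (k - 1)))"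
    "\<And>k. bt_cond f gf T (L (Suc k)) (u k + \<omega> k *\<^sub>R (u k - u (k - 1)))"
proof -
  note step = run_step[OF assms(1-3)]
  have L_bounds: "0 < L k \<and> L k \<le> Lf" for k
  proof (induction k)
    case (Suc k)
    then show ?case using step[of k] by force
  qed (use assms in simp)
  then have "\<forall>k. \<exists>\<omega>. L k \<le> L (Suc k) \<and> L (Suc k) * \<omega>^2 \<le> L k \<and>
    u (Suc k) = T (L (Suc k)) (u k + \<omega> *\<^sub>R (u k - u (k - 1))) \<and>
    bt_cond f gf T (L (Suc k)) (u k + \<omega> *\<^sub>R (u k - u (k - 1)))"
    using step by blast
  then obtain \<omega> where "\<forall>k. L k \<le> L (Suc k) \<and> L (Suc k) * (\<omega> k)^2 \<le> L k \<and>
    u (Suc k) = T (L (Suc k)) (u k + \<omega> k *\<^sub>R (u k - u (k - 1))) \<and>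
    bt_cond f gf T (L (Suc k)) (u k + \<omega> k *\<^sub>R (u k - u (k - 1)))"
    by metis
  with L_bounds that show thesis by blast
qed

end

locale pgh_iterates = composite_minimization +
  fixes L :: "nat \<Rightarrow> real" and u :: "nat \<Rightarrow> 'u::euclidean_space" and \<omega> :: "nat \<Rightarrow> real" and us :: 'u
  assumes L_pos: "0 < L k" and L_le: "L k \<le> Lf" and L_mono: "L k \<le> L (Suc k)"
    and momentum: "L (Suc k) * (\<omega> k)^2 \<le> L k"
    and iterate: "u (Suc k) = T (L (Suc k)) (u k + \<omega> k *\<^sub>R (u k - u (k - 1)))"
    and sufficient_decrease: "bt_cond f gf T (L (Suc k)) (u k + \<omega> k *\<^sub>R (u k - u (k - 1)))"
    and us_in_S: "us \<in> S" and us_min: "\<And>v. v \<in> S \<Longrightarrow> f us + g us \<le> f v + g v"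
begin

abbreviation extrapolated :: "nat \<Rightarrow> 'u" where
  "extrapolated k \<equiv> u k + \<omega> k *\<^sub>R (u k - u (k - 1))"

definition step_sq :: "nat \<Rightarrow> real" where
  "step_sq j = (norm (u (Suc j) - u j))^2"

definition lyapunov :: "nat \<Rightarrow> real" where
  "lyapunov j = f (u (Suc j)) + g (u (Suc j)) - (f us + g us) + L (Suc j) / 2 * step_sq j"

lemma iterate_in_S: "u (Suc k) \<in> S"
  using T_in_S[OF L_pos] by (simp add: iterate)

lemma three_point:
  assumes "z \<in> S"
  shows "f (u (Suc k)) + g (u (Suc k)) + (L (Suc k) + \<mu>) / 2 * (norm (z - u (Suc k)))^2
    - L (Suc k) / 2 * (norm (z - extrapolated k))^2 \<le> f z + g z"
proof (rule prox_grad_three_point[OF gradient_ineq])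
  show "strongly_convex_on S \<mu> g"
    using strongly_convex_on_subset[OF g_strongly_convex subset_UNIV S(1)] .
  show "u (Suc k) \<in> S" by (rule iterate_in_S)
  show "prox_model gf g (L (Suc k)) (extrapolated k) (u (Suc k))
      \<le> prox_model gf g (L (Suc k)) (extrapolated k) w" if "w \<in> S" for w
    using T_minimizes[OF L_pos that] by (simp add: iterate)
  show "f (u (Suc k)) \<le> f (extrapolated k) + inner (gf (extrapolated k)) (u (Suc k) - extrapolated k)
      + L (Suc k) / 2 * (norm (u (Suc k) - extrapolated k))^2"
    using sufficient_decrease by (simp add: bt_cond_def iterate)
qed (use assms mu_pos L_pos less_imp_le in auto)

lemma step_sq_nonneg: "0 \<le> step_sq j"
  by (simp add: step_sq_def)

lemma lyapunov_nonneg: "0 \<le> lyapunov j"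
  using us_min[OF iterate_in_S] L_pos[of "Suc j"] step_sq_nonneg[of j] by (simp add: lyapunov_def)

lemma extrapolation_error: "(norm (u (Suc j) - extrapolated (Suc j)))^2 = (\<omega> (Suc j))^2 * step_sq j"
  by (simp add: step_sq_def power_mult_distrib)

lemma lyapunov_decrease: "lyapunov (Suc j) \<le> lyapunov j - \<mu> / 2 * step_sq (Suc j)"
proof -
  have "f (u (Suc (Suc j))) + g (u (Suc (Suc j))) + (L (Suc (Suc j)) + \<mu>) / 2 * step_sq (Suc j)
      - L (Suc (Suc j)) / 2 * ((\<omega> (Suc j))^2 * step_sq j) \<le> f (u (Suc j)) + g (u (Suc j))"
    using three_point[OF iterate_in_S[of j], where k = "Suc j"] unfolding extrapolation_error
    by (simp add: step_sq_def norm_minus_commute)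
  moreover have "L (Suc (Suc j)) * (\<omega> (Suc j))^2 * step_sq j \<le> L (Suc j) * step_sq j"
    using momentum step_sq_nonneg by (rule mult_right_mono)
  ultimately show ?thesis by (simp add: lyapunov_def field_simps)
qed

lemma objective_gap_le:
  "f (u (Suc k)) + g (u (Suc k)) - (f us + g us)
    \<le> L (Suc k) / 2 * (1 + L (Suc k) / \<mu>) * (norm (u (Suc k) - extrapolated k))^2"
proof -
  define La where "La = L (Suc k)"
  have La: "0 < La" using L_pos by (simp add: La_def)
  define A where "A = (norm (us - u (Suc k)))^2"
  define B where "B = (norm (u (Suc k) - extrapolated k))^2"
  have split: "us - extrapolated k = (us - u (Suc k)) + (u (Suc k) - extrapolated k)"
    by simp
  have "(norm (us - extrapolated k))^2 \<le> (1 + \<mu> / La) * A + (1 + La / \<mu>) * B"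
    using norm_add_sq_le[of "\<mu> / La" "us - u (Suc k)" "u (Suc k) - extrapolated k"]
      La mu_pos unfolding split[symmetric] A_def B_def by simp
  then have "La / 2 * (norm (us - extrapolated k))^2 \<le> (La + \<mu>) / 2 * A + La / 2 * (1 + La / \<mu>) * B"
    using La mu_pos by (simp add: field_simps)
  with three_point[OF us_in_S, of k] show ?thesis
    by (simp add: A_def B_def La_def)
qed

lemma extrapolation_residual_le:
  "(norm (u (Suc (Suc j)) - extrapolated (Suc j)))^2 \<le> 2 * (step_sq (Suc j) + step_sq j)"
proof -
  have "L (Suc (Suc j)) * (\<omega> (Suc j))^2 \<le> L (Suc (Suc j)) * 1"
    using momentum[of "Suc j"] L_mono[of "Suc j"] by simp
  then have "(\<omega> (Suc j))^2 \<le> 1" using L_pos by (simp only: mult_le_cancel_left_pos)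
  have split: "u (Suc (Suc j)) - extrapolated (Suc j)
      = (u (Suc (Suc j)) - u (Suc j)) + - (\<omega> (Suc j) *\<^sub>R (u (Suc j) - u j))"
    by simp
  have "(norm (u (Suc (Suc j)) - extrapolated (Suc j)))^2
      \<le> 2 * step_sq (Suc j) + 2 * (\<omega> (Suc j))^2 * step_sq j"
    using norm_add_sq_le[of 1 "u (Suc (Suc j)) - u (Suc j)" "- (\<omega> (Suc j) *\<^sub>R (u (Suc j) - u j))"]
    unfolding split[symmetric] norm_minus_cancel norm_scaleR power_mult_distrib
    by (simp add: step_sq_def)
  also have "\<dots> \<le> 2 * (step_sq (Suc j) + step_sq j)"
    using mult_right_mono[OF \<open>(\<omega> (Suc j))^2 \<le> 1\<close> step_sq_nonneg[of j]] by simp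
  finally show ?thesis .
qed

lemma lyapunov_bound: "lyapunov (Suc j) \<le> Lf * (2 + Lf / \<mu>) * (step_sq (Suc j) + step_sq j)"
proof -
  define La where "La = L (Suc (Suc j))"
  have La: "0 < La" "La \<le> Lf" using L_pos L_le by (simp_all add: La_def)
  have "La / 2 * (1 + La / \<mu>) \<le> Lf / 2 * (1 + Lf / \<mu>)"
    using La mu_pos by (intro mult_mono add_left_mono divide_right_mono) auto
  then have "La / 2 * (1 + La / \<mu>) * (norm (u (Suc (Suc j)) - extrapolated (Suc j)))^2
      \<le> Lf / 2 * (1 + Lf / \<mu>) * (2 * (step_sq (Suc j) + step_sq j))"
    using extrapolation_residual_le[of j] La mu_pos divide_right_mono[of La Lf \<mu>]
    by (intro mult_mono) auto
  then have "f (u (Suc (Suc j))) + g (u (Suc (Suc j))) - (f us + g us)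
      \<le> Lf / 2 * (1 + Lf / \<mu>) * (2 * (step_sq (Suc j) + step_sq j))"
    using objective_gap_le[of "Suc j"] unfolding La_def by linarith
  moreover have "La * step_sq (Suc j) \<le> Lf * (step_sq (Suc j) + step_sq j)"
    using La step_sq_nonneg[of j] step_sq_nonneg[of "Suc j"] by (intro mult_mono) auto
  moreover have "Lf / 2 * (1 + Lf / \<mu>) * (2 * (step_sq (Suc j) + step_sq j))
      = Lf * (1 + Lf / \<mu>) * (step_sq (Suc j) + step_sq j)"
    "Lf * (2 + Lf / \<mu>) * (step_sq (Suc j) + step_sq j)
      = Lf * (1 + Lf / \<mu>) * (step_sq (Suc j) + step_sq j) + Lf * (step_sq (Suc j) + step_sq j)"
    using mu_pos by (simp_all add: field_simps)
  moreover have "0 \<le> Lf * (step_sq (Suc j) + step_sq j)"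
    using La step_sq_nonneg[of j] step_sq_nonneg[of "Suc j"] by simp
  ultimately show ?thesis unfolding lyapunov_def La_def by linarith
qed

theorem R_linear_convergence: "\<exists>C \<tau>. 0 < C \<and> 0 < \<tau> \<and> \<tau> < 1 \<and> (\<forall>k. norm (u k - us) \<le> C * \<tau> ^ k)"
proof -
  have "0 < Lf" using L_pos[of 0] L_le[of 0] by simp
  then have "0 < Lf * (2 + Lf / \<mu>)" using mu_pos by (intro mult_pos_pos add_pos_nonneg) auto
  then obtain M q where q: "0 < q" "q < 1" and "0 \<le> M" and decay: "\<And>j. lyapunov j \<le> M * q ^ j"
    using geometric_decay_of_lyapunov[of step_sq lyapunov "\<mu> / 2" "Lf * (2 + Lf / \<mu>)",
        OF step_sq_nonneg lyapunov_nonneg lyapunov_decrease lyapunov_bound] mu_pos by auto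
  define \<tau> where "\<tau> = sqrt q"
  define C0 where "C0 = sqrt (2 * M / \<mu>) / \<tau>"
  have \<tau>: "0 < \<tau>" "\<tau> < 1" using q by (simp_all add: \<tau>_def)
  have "0 \<le> C0" using \<open>0 \<le> M\<close> mu_pos \<tau> by (simp add: C0_def)
  have tail: "norm (u (Suc j) - us) \<le> C0 * \<tau> ^ Suc j" for j
  proof -
    have "\<mu> / 2 * (norm (u (Suc j) - us))^2 \<le> f (u (Suc j)) + g (u (Suc j)) - (f us + g us)"
      using minimizer_growth[OF us_in_S us_min iterate_in_S[of j]] by simp
    also have "\<dots> \<le> lyapunov j"
      using L_pos[of "Suc j"] step_sq_nonneg[of j] by (simp add: lyapunov_def)
    also have "\<dots> \<le> M * q ^ j" by (rule decay)
    finally have "(norm (u (Suc j) - us))^2 \<le> 2 * M / \<mu> * q ^ j"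
      using mu_pos by (simp add: field_simps)
    then have "norm (u (Suc j) - us) \<le> sqrt (2 * M / \<mu> * q ^ j)" by (rule real_le_rsqrt)
    also have "\<dots> = sqrt (2 * M / \<mu>) * \<tau> ^ j"
      unfolding \<tau>_def by (simp only: real_sqrt_mult real_sqrt_power)
    also have "\<dots> = C0 * \<tau> ^ Suc j"
      using \<tau> by (simp add: C0_def)
    finally show ?thesis .
  qed
  define C where "C = C0 + norm (u 0 - us) + 1"
  have "norm (u k - us) \<le> C * \<tau> ^ k" for k
  proof (cases k)
    case 0
    then show ?thesis using \<open>0 \<le> C0\<close> by (simp add: C_def)
  next
    case (Suc j)
    have "C0 * \<tau> ^ k \<le> C * \<tau> ^ k" using \<tau> by (intro mult_right_mono) (auto simp: C_def)
    with tail[of j] Suc show ?thesis by simp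
  qed
  moreover have "0 < C" using \<open>0 \<le> C0\<close> by (simp add: C_def add_nonneg_pos)
  ultimately show ?thesis using \<tau> by blast
qed

end

theorem (in composite_minimization) pgh_run_R_linear_convergence:
  assumes "1 < \<eta>" "0 < L 0" "L 0 \<le> Lf" "\<And>L v. 0 < L \<Longrightarrow> Tc L v = T L v"
    and "pgh_run f gf (\<lambda>z. f z + g z) Tc T \<eta> Lf L u"
  shows "\<exists>us\<in>S. (\<forall>v\<in>S. f us + g us \<le> f v + g v) \<and>
    (\<forall>v\<in>S. (\<forall>z\<in>S. f v + g v \<le> f z + g z) \<longrightarrow> v = us) \<and>
    (\<exists>C \<tau>. 0 < C \<and> 0 < \<tau> \<and> \<tau> < 1 \<and> (\<forall>k. norm (u k - us) \<le> C * \<tau> ^ k))"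
proof -
  obtain us where us: "us \<in> S" "\<forall>v\<in>S. f us + g us \<le> f v + g v"
    using exists_minimizer by blast
  obtain \<omega> where "pgh_iterates f g gf S Lf \<mu> T L u \<omega> us"
    using run_iterates[OF assms(1,4,5,2,3)] us
    by (metis composite_minimization_axioms pgh_iterates.intro pgh_iterates_axioms.intro)
  then interpret pgh_iterates f g gf S Lf \<mu> T L u \<omega> us .
  show ?thesis
    using us minimizer_unique[OF us(1)] R_linear_convergence by blast
qed

section \<open>Huberized hinge losses of linear scores\<close>

lemma phiH_scaled:
  "0 < \<delta> \<Longrightarrow> 2 * \<delta> * phiH \<delta> t = (if 1 < t then 0 else if 1 - \<delta> < t then (1 - t)^2 else 2 * \<delta> * (1 - t) - \<delta>^2)"
  by (simp add: phiH_def power2_eq_square field_simps)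

lemma dphiH_scaled:
  "0 < \<delta> \<Longrightarrow> 2 * \<delta> * (dphiH \<delta> t * c) = (if 1 < t then 0 else if 1 - \<delta> < t then - 2 * (1 - t) * c else - 2 * \<delta> * c)"
  by (simp add: dphiH_def field_simps)

lemma phiH_gradient_ineq:
  assumes "0 < \<delta>"
  shows "phiH \<delta> t + dphiH \<delta> t * (s - t) \<le> phiH \<delta> s"
proof -
  have "0 \<le> (s - t)^2" "0 \<le> (s - 1 + \<delta>)^2" "0 \<le> (s - 1)^2" by simp_all
  moreover have "t \<le> 1 \<longrightarrow> 1 < s \<longrightarrow> 0 \<le> (1 - t) * (2 * s - 1 - t)"
    "s + \<delta> \<le> 1 \<longrightarrow> 0 \<le> \<delta> * (2 - \<delta> - 2 * s)" "1 < s \<longrightarrow> 0 \<le> \<delta> * (\<delta> + 2 * s - 2)"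
    "1 < \<delta> + t \<longrightarrow> s + \<delta> \<le> 1 \<longrightarrow> 0 \<le> (t - 2 * s + 1 - \<delta>) * (t - 1 + \<delta>)"
    using assms by auto
  ultimately have "2 * \<delta> * phiH \<delta> t + 2 * \<delta> * (dphiH \<delta> t * (s - t)) \<le> 2 * \<delta> * phiH \<delta> s"
    unfolding phiH_scaled[OF assms] dphiH_scaled[OF assms] using assms
    by (auto simp: power2_eq_square algebra_simps)
  then have "2 * \<delta> * (phiH \<delta> t + dphiH \<delta> t * (s - t)) \<le> 2 * \<delta> * phiH \<delta> s"
    by (simp only: distrib_left)
  then show ?thesis by (subst (asm) mult_le_cancel_left_pos) (use assms in auto)
qed

lemma phiH_descent:
  assumes "0 < \<delta>"
  shows "phiH \<delta> s \<le> phiH \<delta> t + dphiH \<delta> t * (s - t) + (s - t)^2 / (2 * \<delta>)"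
proof -
  have "0 \<le> (s - t)^2" "0 \<le> (s - 1 + \<delta>)^2" "0 \<le> (s - 1)^2" "0 \<le> (t - s - \<delta>)^2" "0 \<le> (s - t - \<delta>)^2"
    by simp_all
  moreover have "1 < t \<longrightarrow> s \<le> 1 \<longrightarrow> 0 \<le> (t - 1) * (t + 1 - 2 * s)"
    "1 < t \<longrightarrow> 0 \<le> \<delta> * (t - 1)" "t + \<delta> \<le> 1 \<longrightarrow> 0 \<le> \<delta> * (1 - \<delta> - t)"
    "t + \<delta> \<le> 1 \<longrightarrow> 1 < \<delta> + s \<longrightarrow> 0 \<le> (2 * s - 1 + \<delta> - t) * (1 - \<delta> - t)"
    using assms by auto
  ultimately have "2 * \<delta> * phiH \<delta> s \<le> 2 * \<delta> * phiH \<delta> t + 2 * \<delta> * (dphiH \<delta> t * (s - t)) + (s - t)^2"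
    unfolding phiH_scaled[OF assms] dphiH_scaled[OF assms] using assms
    by (auto simp: power2_eq_square algebra_simps)
  then show ?thesis using assms by (simp add: field_simps)
qed

lemma huber_sum_gradient_ineq:
  fixes lin :: "'i \<Rightarrow> 'u::real_vector \<Rightarrow> real"
  assumes "0 < \<delta>" "\<And>i. i \<in> I \<Longrightarrow> 0 \<le> a i" "\<And>i. i \<in> I \<Longrightarrow> linear (lin i)"
  shows "(\<Sum>i\<in>I. a i * phiH \<delta> (lin i w)) + (\<Sum>i\<in>I. a i * dphiH \<delta> (lin i w) * lin i (z - w))
    \<le> (\<Sum>i\<in>I. a i * phiH \<delta> (lin i z))"
proof -
  have "a i * phiH \<delta> (lin i w) + a i * dphiH \<delta> (lin i w) * lin i (z - w) \<le> a i * phiH \<delta> (lin i z)"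
    if "i \<in> I" for i
    using mult_left_mono[OF phiH_gradient_ineq[OF assms(1), of "lin i w" "lin i z"] assms(2)[OF that]]
    by (simp add: linear_diff[OF assms(3)[OF that]] algebra_simps)
  then show ?thesis by (simp add: sum.distrib[symmetric] sum_mono)
qed

lemma huber_sum_descent:
  fixes lin :: "'i \<Rightarrow> 'u::real_vector \<Rightarrow> real"
  assumes "0 < \<delta>" "\<And>i. i \<in> I \<Longrightarrow> 0 \<le> a i" "\<And>i. i \<in> I \<Longrightarrow> linear (lin i)"
  shows "(\<Sum>i\<in>I. a i * phiH \<delta> (lin i z))
    \<le> (\<Sum>i\<in>I. a i * phiH \<delta> (lin i w)) + (\<Sum>i\<in>I. a i * dphiH \<delta> (lin i w) * lin i (z - w))
      + (\<Sum>i\<in>I. a i * (lin i (z - w))^2) / (2 * \<delta>)"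
proof -
  have "a i * phiH \<delta> (lin i z)
      \<le> a i * phiH \<delta> (lin i w) + a i * dphiH \<delta> (lin i w) * lin i (z - w) + a i * (lin i (z - w))^2 / (2 * \<delta>)"
    if "i \<in> I" for i
    using mult_left_mono[OF phiH_descent[OF assms(1), of "lin i z" "lin i w"] assms(2)[OF that]]
    by (simp add: linear_diff[OF assms(3)[OF that]] algebra_simps)
  then show ?thesis by (simp add: sum.distrib[symmetric] sum_divide_distrib sum_mono)
qed

lemma affine_inner_sq_le:
  fixes x q :: "'a::real_inner"
  shows "(p + inner x q)^2 \<le> (1 + (norm x)^2) * (p^2 + (norm q)^2)"
proof -
  have "(inner (1::real, x) (p, q))^2 \<le> (norm (1::real, x))^2 * (norm (p, q))^2"
    using Cauchy_Schwarz_ineq[of "(1::real, x)" "(p, q)"] by (simp add: power2_norm_eq_inner)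
  then show ?thesis by (simp add: norm_prod_sq)
qed

section \<open>The binary problem\<close>

lemma linear_binary_margin: "linear (\<lambda>u::real \<times> 'a::real_inner. y * (fst u + x \<bullet> snd u))"
  by (simp add: linear_iff inner_add_right algebra_simps)

lemma fB_eq_sum: "fB n x y \<delta> u = (\<Sum>i<n. 1 / real n * phiH \<delta> (y i * (fst u + x i \<bullet> snd u)))"
  by (simp add: fB_def sum_distrib_left)

lemma inner_gradfB:
  "inner (gradfB n x y \<delta> w) d
    = (\<Sum>i<n. 1 / real n * dphiH \<delta> (y i * (fst w + x i \<bullet> snd w)) * (y i * (fst d + x i \<bullet> snd d)))"
proof -
  have "inner (gradfB n x y \<delta> w) d
      = 1 / real n * (\<Sum>i<n. dphiH \<delta> (y i * (fst w + x i \<bullet> snd w)) * (y i * (fst d + x i \<bullet> snd d)))"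
    unfolding gradfB_def inner_prod_def
    by (simp add: inner_sum_left sum_distrib_left sum.distrib algebra_simps)
  then show ?thesis by (simp add: sum_distrib_left mult.assoc)
qed

lemma fB_gradient_ineq:
  assumes "0 < \<delta>"
  shows "fB n x y \<delta> w + inner (gradfB n x y \<delta> w) (z - w) \<le> fB n x y \<delta> z"
  unfolding fB_eq_sum inner_gradfB
  using huber_sum_gradient_ineq[OF assms, of "{..<n}" "\<lambda>_. 1 / real n" "\<lambda>i u. y i * (fst u + x i \<bullet> snd u)"]
  by (simp add: linear_binary_margin)

lemma fB_descent_ineq:
  assumes "0 < \<delta>"
  shows "fB n x y \<delta> z \<le> fB n x y \<delta> w + inner (gradfB n x y \<delta> w) (z - w) + LfB n x y \<delta> / 2 * (norm (z - w))^2"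
proof -
  have "(y i * (fst (z - w) + x i \<bullet> snd (z - w)))^2 \<le> (y i)^2 * (1 + (norm (x i))^2) * (norm (z - w))^2" for i
    using mult_left_mono[OF affine_inner_sq_le[of "fst (z - w)" "x i" "snd (z - w)"], of "(y i)^2"]
    by (simp add: power_mult_distrib norm_prod_sq[of "z - w"] mult.assoc)
  then have "(\<Sum>i<n. 1 / real n * (y i * (fst (z - w) + x i \<bullet> snd (z - w)))^2) / (2 * \<delta>)
      \<le> (\<Sum>i<n. 1 / real n * ((y i)^2 * (1 + (norm (x i))^2) * (norm (z - w))^2)) / (2 * \<delta>)"
    using assms by (intro divide_right_mono sum_mono mult_left_mono) auto
  also have "\<dots> = 1 / real n * ((\<Sum>i<n. (y i)^2 * (1 + (norm (x i))^2)) * (norm (z - w))^2) / (2 * \<delta>)"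
    by (simp only: sum_distrib_left[symmetric] sum_distrib_right[symmetric])
  also have "\<dots> = LfB n x y \<delta> / 2 * (norm (z - w))^2"
    by (simp add: LfB_def)
  finally show ?thesis
    unfolding fB_eq_sum inner_gradfB
    using huber_sum_descent[OF assms, of "{..<n}" "\<lambda>_. 1 / real n" "\<lambda>i u. y i * (fst u + x i \<bullet> snd u)" z w]
    by (simp add: linear_binary_margin)
qed

lemma gB_eq_elastic_net:
  "gB lam1 lam2 lam3 u = lam1 * l1norm (snd u) + lam2 / 2 * (norm (snd u))^2 + lam3 / 2 * (norm (fst u))^2"
  by (simp add: gB_def)

lemma convex_on_l1norm: "convex_on UNIV l1norm"
  unfolding l1norm_def[abs_def]
  by (rule convex_on_sum_abs_linear) (simp add: linear_iff)

lemma gB_strongly_convex: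
  assumes "0 \<le> lam1"
  shows "strongly_convex_on UNIV (min lam2 lam3) (gB lam1 lam2 lam3)"
  unfolding gB_eq_elastic_net[abs_def] by (rule strongly_convex_on_elastic_net[OF convex_on_l1norm assms])

lemma gB_lower_bound: "0 \<le> lam1 \<Longrightarrow> min lam2 lam3 / 2 * (norm u)^2 \<le> gB lam1 lam2 lam3 u"
  unfolding gB_eq_elastic_net
  by (rule elastic_net_lower_bound) (simp_all add: l1norm_def sum_nonneg)

lemma soft_zero: "soft 0 t = t"
  by (simp add: soft_def sgn_mult_abs)

lemma soft_residual:
  assumes "0 \<le> \<nu>"
  shows "\<bar>B - soft \<nu> B\<bar> \<le> \<nu>" "(B - soft \<nu> B) * soft \<nu> B = \<nu> * \<bar>soft \<nu> B\<bar>"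
  using assms by (auto simp: soft_def sgn_if max_def algebra_simps)

lemma soft_threshold_minimizes:
  assumes "0 < A" "0 \<le> \<nu>"
  shows "A / 2 * (soft \<nu> B / A)^2 - B * (soft \<nu> B / A) + \<nu> * \<bar>soft \<nu> B / A\<bar>
    \<le> A / 2 * s^2 - B * s + \<nu> * \<bar>s\<bar>"
proof -
  define m where "m = soft \<nu> B / A"
  define r where "r = B - soft \<nu> B"
  \<comment> \<open>r is a subgradient of \<nu> |.| at m, and the quadratic part grows by A/2 (s - m)^2\<close>
  have "r * m = \<nu> * \<bar>m\<bar>" "\<bar>r\<bar> \<le> \<nu>"
    using soft_residual[OF assms(2), of B] assms(1)
    by (simp_all add: m_def r_def abs_divide field_simps)
  moreover have "A / 2 * s^2 - B * s - (A / 2 * m^2 - B * m) = A / 2 * (s - m)^2 - r * s + r * m"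
    using assms(1) by (simp add: m_def r_def power2_eq_square field_simps)
  moreover have "r * s \<le> \<nu> * \<bar>s\<bar>"
    using \<open>\<bar>r\<bar> \<le> \<nu>\<close> abs_ge_self[of "r * s"] mult_right_mono[of "\<bar>r\<bar>" \<nu> "\<bar>s\<bar>"]
    by (simp add: abs_mult)
  moreover have "0 \<le> A / 2 * (s - m)^2" using assms(1) by simp
  ultimately show ?thesis unfolding m_def[symmetric] by linarith
qed

definition scalar_prox_model :: "real \<Rightarrow> real \<Rightarrow> real \<Rightarrow> real \<Rightarrow> real \<Rightarrow> real \<Rightarrow> real" where
  "scalar_prox_model c v L lam \<nu> s = c * (s - v) + L / 2 * (s - v)^2 + lam / 2 * s^2 + \<nu> * \<bar>s\<bar>"

lemma scalar_prox_model_min: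
  assumes "0 < L + lam" "0 \<le> \<nu>"
  shows "scalar_prox_model c v L lam \<nu> (soft \<nu> (L * v - c) / (L + lam)) \<le> scalar_prox_model c v L lam \<nu> s"
proof -
  have "scalar_prox_model c v L lam \<nu> s = (L + lam) / 2 * s^2 - (L * v - c) * s + \<nu> * \<bar>s\<bar> + (L / 2 * v^2 - c * v)"
    for s
    by (simp add: scalar_prox_model_def power2_eq_square field_simps)
  with soft_threshold_minimizes[OF assms, of "L * v - c" s] show ?thesis by simp
qed

lemma prox_model_gB_separable:
  fixes v z :: "real \<times> (real^'p)"
  shows "prox_model gf (gB lam1 lam2 lam3) L v z
    = scalar_prox_model (fst (gf v)) (fst v) L lam3 0 (fst z)
      + (\<Sum>j\<in>UNIV. scalar_prox_model (snd (gf v) $ j) (snd v $ j) L lam2 lam1 (snd z $ j))"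
proof -
  have "(\<Sum>j\<in>UNIV. scalar_prox_model (snd (gf v) $ j) (snd v $ j) L lam2 lam1 (snd z $ j))
      = inner (snd (gf v)) (snd z - snd v) + L / 2 * (norm (snd z - snd v))^2
        + lam2 / 2 * (norm (snd z))^2 + lam1 * l1norm (snd z)"
    by (simp add: scalar_prox_model_def inner_vec_def l1norm_def norm_vec_sq sum.distrib sum_distrib_left)
  then show ?thesis
    by (simp add: prox_model_def scalar_prox_model_def gB_def inner_prod_def norm_prod_sq[of "z - v"]
        distrib_left)
qed

lemma TuB_minimizes:
  assumes "0 < L" "0 \<le> lam1" "0 \<le> lam2" "0 \<le> lam3"
  shows "prox_model (gradfB n x y \<delta>) (gB lam1 lam2 lam3) L v (TuB n x y \<delta> lam1 lam2 lam3 L v)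
    \<le> prox_model (gradfB n x y \<delta>) (gB lam1 lam2 lam3) L v z"
proof -
  define c where "c = gradfB n x y \<delta> v"
  have TuB_fst: "fst (TuB n x y \<delta> lam1 lam2 lam3 L v) = soft 0 (L * fst v - fst c) / (L + lam3)"
    and TuB_snd: "snd (TuB n x y \<delta> lam1 lam2 lam3 L v) $ j = soft lam1 (L * (snd v $ j) - snd c $ j) / (L + lam2)"
    for j by (simp_all add: TuB_def softvec_def soft_zero c_def)
  show ?thesis
    unfolding prox_model_gB_separable c_def[symmetric] TuB_fst TuB_snd using assms
    by (intro add_mono sum_mono scalar_prox_model_min) auto
qed

lemma TcB_eq_TuB:
  assumes "0 < L" "0 \<le> lam1" "0 < lam2" "0 < lam3"
  shows "TcB n x y \<delta> lam1 lam2 lam3 L v = TuB n x y \<delta> lam1 lam2 lam3 L v"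
  unfolding TcB_def
proof (rule prox_eq_prox_model_minimizer[OF gB_strongly_convex[OF assms(2)] _ assms(1)])
  show "0 \<le> min lam2 lam3" using assms by simp
  show "prox_model (gradfB n x y \<delta>) (gB lam1 lam2 lam3) L v (TuB n x y \<delta> lam1 lam2 lam3 L v)
      \<le> prox_model (gradfB n x y \<delta>) (gB lam1 lam2 lam3) L v z" for z
    by (rule TuB_minimizes) (use assms in auto)
qed

lemma binary_case:
  fixes x :: "nat \<Rightarrow> real^'p" and u :: "nat \<Rightarrow> real \<times> (real^'p)"
  assumes "0 \<le> lam1" "0 < lam2" "0 < lam3" "0 < \<delta>" "1 < \<eta>" "0 < L 0" "L 0 \<le> LfB n x y \<delta>"
    and run: "pgh_run (fB n x y \<delta>) (gradfB n x y \<delta>) (\<lambda>v. fB n x y \<delta> v + gB lam1 lam2 lam3 v)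
      (TcB n x y \<delta> lam1 lam2 lam3) (TuB n x y \<delta> lam1 lam2 lam3) \<eta> (LfB n x y \<delta>) L u"
  shows "\<exists>us. (\<forall>v. fB n x y \<delta> us + gB lam1 lam2 lam3 us \<le> fB n x y \<delta> v + gB lam1 lam2 lam3 v) \<and>
    (\<forall>v. (\<forall>z. fB n x y \<delta> v + gB lam1 lam2 lam3 v \<le> fB n x y \<delta> z + gB lam1 lam2 lam3 z) \<longrightarrow> v = us) \<and>
    (\<exists>C \<tau>. 0 < C \<and> 0 < \<tau> \<and> \<tau> < 1 \<and> (\<forall>k. norm (u k - us) \<le> C * \<tau> ^ k))"
proof -
  interpret composite_minimization "fB n x y \<delta>" "gB lam1 lam2 lam3" "gradfB n x y \<delta>" UNIV
    "LfB n x y \<delta>" "min lam2 lam3" "TuB n x y \<delta> lam1 lam2 lam3"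
  proof unfold_locales
    show "fB n x y \<delta> w + inner (gradfB n x y \<delta> w) (z - w) \<le> fB n x y \<delta> z" for z w
      using fB_gradient_ineq \<open>0 < \<delta>\<close> .
    show "fB n x y \<delta> z \<le> fB n x y \<delta> w + inner (gradfB n x y \<delta> w) (z - w) + LfB n x y \<delta> / 2 * (norm (z - w))^2"
      for z w
      using fB_descent_ineq \<open>0 < \<delta>\<close> .
    show "min lam2 lam3 / 2 * (norm z)^2 \<le> gB lam1 lam2 lam3 z" for z
      using gB_lower_bound \<open>0 \<le> lam1\<close> .
  qed (use assms in \<open>auto intro!: gB_strongly_convex TuB_minimizes\<close>)
  have "TcB n x y \<delta> lam1 lam2 lam3 L' v = TuB n x y \<delta> lam1 lam2 lam3 L' v" if "0 < L'" for L' v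
    using TcB_eq_TuB that assms by blast
  from pgh_run_R_linear_convergence[OF assms(5-7) this run] show ?thesis by simp
qed

section \<open>The multi-class problem\<close>

lemma linear_class_score: "linear (\<lambda>U::(real^'j) \<times> (real^'j^'p). fst U $ j + x \<bullet> column j (snd U))"
  by (simp add: linear_iff column_def inner_vec_def sum.distrib sum_distrib_left algebra_simps)

lemma ellM_eq_sum:
  "ellM n x y \<delta> U = (\<Sum>p\<in>{..<n} \<times> UNIV. aM y (fst p) (snd p) / real n
     * phiH \<delta> (fst U $ snd p + x (fst p) \<bullet> column (snd p) (snd U)))"
  by (simp add: ellM_def sum.cartesian_product split_def sum_distrib_left)

lemma inner_gradM:
  fixes w d :: "(real^'j) \<times> (real^'j^'p)"
  shows "inner (gradM n x y \<delta> w) d = (\<Sum>p\<in>{..<n} \<times> UNIV. aM y (fst p) (snd p) / real n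
     * dphiH \<delta> (fst w $ snd p + x (fst p) \<bullet> column (snd p) (snd w))
     * (fst d $ snd p + x (fst p) \<bullet> column (snd p) (snd d)))"
proof -
  define g where "g i j = aM y i j * dphiH \<delta> (fst w $ j + x i \<bullet> column j (snd w)) / real n" for i j
  have "inner (fst (gradM n x y \<delta> w)) (fst d) = (\<Sum>j\<in>UNIV. \<Sum>i<n. g i j * fst d $ j)"
    by (simp add: gradM_def inner_vec_def g_def sum_distrib_left sum_distrib_right sum_divide_distrib)
  also have "\<dots> = (\<Sum>i<n. \<Sum>j\<in>UNIV. g i j * fst d $ j)"
    by (rule sum.swap)
  finally have b: "inner (fst (gradM n x y \<delta> w)) (fst d) = (\<Sum>i<n. \<Sum>j\<in>UNIV. g i j * fst d $ j)" .
  have "inner (snd (gradM n x y \<delta> w)) (snd d) = (\<Sum>r\<in>UNIV. \<Sum>j\<in>UNIV. \<Sum>i<n. g i j * (x i $ r * snd d $ r $ j))"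
    by (simp add: gradM_def inner_vec_def g_def sum_distrib_left sum_distrib_right sum_divide_distrib
        algebra_simps)
  also have "\<dots> = (\<Sum>j\<in>UNIV. \<Sum>r\<in>UNIV. \<Sum>i<n. g i j * (x i $ r * snd d $ r $ j))"
    by (rule sum.swap)
  also have "\<dots> = (\<Sum>j\<in>UNIV. \<Sum>i<n. \<Sum>r\<in>UNIV. g i j * (x i $ r * snd d $ r $ j))"
    by (rule sum.cong[OF refl], rule sum.swap)
  also have "\<dots> = (\<Sum>i<n. \<Sum>j\<in>UNIV. \<Sum>r\<in>UNIV. g i j * (x i $ r * snd d $ r $ j))"
    by (rule sum.swap)
  finally have W: "inner (snd (gradM n x y \<delta> w)) (snd d)
      = (\<Sum>i<n. \<Sum>j\<in>UNIV. g i j * (x i \<bullet> column j (snd d)))"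
    by (simp add: column_def inner_vec_def sum_distrib_left)
  show ?thesis
    by (simp add: inner_prod_def b W sum.cartesian_product split_def g_def sum.distrib[symmetric]
        algebra_simps add_divide_distrib)
qed

lemma sum_norm_column_sq: "(\<Sum>j\<in>UNIV. (norm (column j (W::real^'j^'p)))^2) = (norm W)^2"
proof -
  have "(\<Sum>j\<in>UNIV. (norm (column j W))^2) = (\<Sum>j\<in>UNIV. \<Sum>r\<in>UNIV. (W $ r $ j)^2)"
    by (simp add: norm_vec_sq column_def)
  also have "\<dots> = (\<Sum>r\<in>UNIV. \<Sum>j\<in>UNIV. (W $ r $ j)^2)" by (rule sum.swap)
  finally show ?thesis by (simp add: norm_vec_sq[of W] norm_vec_sq[of "W $ r" for r])
qed

lemma ellM_gradient_ineq:
  assumes "0 < \<delta>"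
  shows "ellM n x y \<delta> w + inner (gradM n x y \<delta> w) (z - w) \<le> ellM n x y \<delta> z"
  unfolding ellM_eq_sum inner_gradM
  using huber_sum_gradient_ineq[OF assms, of "{..<n} \<times> UNIV" "\<lambda>p. aM y (fst p) (snd p) / real n"
      "\<lambda>p U. fst U $ snd p + x (fst p) \<bullet> column (snd p) (snd U)"]
  by (simp add: linear_class_score aM_def mult.assoc)

lemma ellM_descent_ineq:
  fixes z w :: "(real^'j) \<times> (real^'j^'p)"
  assumes "0 < \<delta>"
  shows "ellM n x y \<delta> z \<le> ellM n x y \<delta> w + inner (gradM n x y \<delta> w) (z - w)
    + LmM n x \<delta> CARD('j) / 2 * (norm (z - w))^2"
proof -
  define d where "d = z - w"
  define Q where "Q i = 1 + (norm (x i))^2" for i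
  have term_bound: "aM y i j / real n * (fst d $ j + x i \<bullet> column j (snd d))^2
      \<le> 1 / real n * (Q i * ((fst d $ j)^2 + (norm (column j (snd d)))^2))" for i j
    using affine_inner_sq_le[of "fst d $ j" "x i" "column j (snd d)"]
    by (intro mult_mono divide_right_mono) (auto simp: aM_def Q_def)
  have "(\<Sum>p\<in>{..<n} \<times> UNIV. aM y (fst p) (snd p) / real n * (fst d $ snd p + x (fst p) \<bullet> column (snd p) (snd d))^2)
      \<le> (\<Sum>i<n. \<Sum>j\<in>UNIV. 1 / real n * (Q i * ((fst d $ j)^2 + (norm (column j (snd d)))^2)))"
    unfolding sum.cartesian_product split_def by (intro sum_mono term_bound)
  also have "\<dots> = (\<Sum>i<n. 1 / real n * (Q i * (norm d)^2))"
  proof -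
    have "(\<Sum>j\<in>UNIV. (fst d $ j)^2 + (norm (column j (snd d)))^2) = (norm d)^2"
      by (simp add: sum.distrib sum_norm_column_sq norm_vec_sq[of "fst d"] norm_prod_sq[of d])
    then show ?thesis by (simp only: sum_distrib_left[symmetric])
  qed
  also have "\<dots> = 1 / real n * (\<Sum>i<n. Q i) * (norm d)^2"
    by (simp only: sum_distrib_left[symmetric] sum_distrib_right[symmetric] mult.assoc)
  also have "\<dots> \<le> real CARD('j) * (1 / real n * (\<Sum>i<n. Q i) * (norm d)^2)"
  proof -
    have "0 \<le> 1 / real n * (\<Sum>i<n. Q i) * (norm d)^2" by (simp add: Q_def sum_nonneg)
    from mult_right_mono[OF _ this, of 1 "real CARD('j)"] show ?thesis by simp
  qed
  finally have "(\<Sum>p\<in>{..<n} \<times> UNIV. aM y (fst p) (snd p) / real n * (fst d $ snd p + x (fst p) \<bullet> column (snd p) (snd d))^2) / (2 * \<delta>)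
      \<le> LmM n x \<delta> CARD('j) / 2 * (norm d)^2"
    using assms by (simp add: LmM_def Q_def divide_right_mono field_simps)
  then show ?thesis
    unfolding ellM_eq_sum inner_gradM
    using huber_sum_descent[OF assms, of "{..<n} \<times> UNIV" "\<lambda>p. aM y (fst p) (snd p) / real n"
      "\<lambda>p U. fst U $ snd p + x (fst p) \<bullet> column (snd p) (snd U)" z w]
    by (simp add: linear_class_score aM_def d_def mult.assoc)
qed

lemma subspace_UsetM: "subspace UsetM"
  unfolding subspace_def UsetM_def
  by (auto simp: matrix_vector_mult_add_rdistrib inner_add_right scaleR_matrix_vector_assoc[symmetric])

lemma GM_eq_elastic_net:
  "GM lam1 lam2 lam3 U = lam1 * (\<Sum>p\<in>UNIV. \<bar>snd U $ fst p $ snd p\<bar>)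
    + lam2 / 2 * (norm (snd U))^2 + lam3 / 2 * (norm (fst U))^2"
  by (simp add: GM_def sum.cartesian_product split_def flip: UNIV_Times_UNIV)

lemma GM_strongly_convex:
  assumes "0 \<le> lam1"
  shows "strongly_convex_on UNIV (min lam2 lam3) (GM lam1 lam2 lam3 :: (real^'j) \<times> (real^'j^'p) \<Rightarrow> real)"
proof -
  have "convex_on UNIV (\<lambda>W::real^'j^'p. \<Sum>p\<in>UNIV. \<bar>W $ fst p $ snd p\<bar>)"
    by (rule convex_on_sum_abs_linear) (simp add: linear_iff)
  from strongly_convex_on_elastic_net[OF this assms] show ?thesis
    unfolding GM_eq_elastic_net[abs_def] .
qed

lemma GM_lower_bound: "0 \<le> lam1 \<Longrightarrow> min lam2 lam3 / 2 * (norm U)^2 \<le> GM lam1 lam2 lam3 U"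
  unfolding GM_eq_elastic_net by (rule elastic_net_lower_bound) (simp_all add: sum_nonneg)

lemma TM_eq_arg_min: "TM n x y \<delta> lam1 lam2 lam3 L V
    = arg_min (prox_model (gradM n x y \<delta>) (GM lam1 lam2 lam3) L V) (\<lambda>U. U \<in> UsetM)"
  by (simp add: TM_def prox_model_def[abs_def])

lemma multiclass_case:
  fixes x :: "nat \<Rightarrow> real^'p" and y :: "nat \<Rightarrow> 'j::finite" and U :: "nat \<Rightarrow> (real^'j) \<times> (real^'j^'p)"
  assumes "0 \<le> lam1" "0 < lam2" "0 < lam3" "0 < \<delta>" "1 < \<eta>" "0 < L 0" "L 0 \<le> LmM n x \<delta> CARD('j)"
    and run: "pgh_run (ellM n x y \<delta>) (gradM n x y \<delta>) (\<lambda>V. ellM n x y \<delta> V + GM lam1 lam2 lam3 V)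
      (TM n x y \<delta> lam1 lam2 lam3) (TM n x y \<delta> lam1 lam2 lam3) \<eta> (LmM n x \<delta> CARD('j)) L U"
  shows "\<exists>Us\<in>UsetM. (\<forall>V\<in>UsetM. ellM n x y \<delta> Us + GM lam1 lam2 lam3 Us \<le> ellM n x y \<delta> V + GM lam1 lam2 lam3 V) \<and>
    (\<forall>V\<in>UsetM. (\<forall>Z\<in>UsetM. ellM n x y \<delta> V + GM lam1 lam2 lam3 V \<le> ellM n x y \<delta> Z + GM lam1 lam2 lam3 Z)
      \<longrightarrow> V = Us) \<and>
    (\<exists>C \<tau>. 0 < C \<and> 0 < \<tau> \<and> \<tau> < 1 \<and> (\<forall>k. norm (U k - Us) \<le> C * \<tau> ^ k))"
proof -
  have T: "TM n x y \<delta> lam1 lam2 lam3 L' V \<in> UsetM \<and> (\<forall>Z\<in>UsetM.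
      prox_model (gradM n x y \<delta>) (GM lam1 lam2 lam3) L' V (TM n x y \<delta> lam1 lam2 lam3 L' V)
      \<le> prox_model (gradM n x y \<delta>) (GM lam1 lam2 lam3) L' V Z)" if "0 < L'" for L' V
    unfolding TM_eq_arg_min
  proof (rule prox_model_arg_min[OF GM_strongly_convex GM_lower_bound])
    show "UsetM \<noteq> {}" using subspace_0[OF subspace_UsetM] by blast
  qed (use assms that closed_subspace[OF subspace_UsetM] in auto)
  interpret composite_minimization "ellM n x y \<delta>" "GM lam1 lam2 lam3" "gradM n x y \<delta>" UsetM
    "LmM n x \<delta> CARD('j)" "min lam2 lam3" "TM n x y \<delta> lam1 lam2 lam3"
  proof unfold_locales
    show "ellM n x y \<delta> W + inner (gradM n x y \<delta> W) (Z - W) \<le> ellM n x y \<delta> Z" for Z W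
      using ellM_gradient_ineq \<open>0 < \<delta>\<close> .
    show "ellM n x y \<delta> Z \<le> ellM n x y \<delta> W + inner (gradM n x y \<delta> W) (Z - W)
        + LmM n x \<delta> CARD('j) / 2 * (norm (Z - W))^2" for Z W
      using ellM_descent_ineq \<open>0 < \<delta>\<close> .
    show "min lam2 lam3 / 2 * (norm Z)^2 \<le> GM lam1 lam2 lam3 Z" for Z
      using GM_lower_bound \<open>0 \<le> lam1\<close> .
    show "convex UsetM" "closed UsetM"
      using subspace_imp_convex closed_subspace subspace_UsetM by blast+
    show "UsetM \<noteq> {}" using subspace_0[OF subspace_UsetM] by blast
    show "strongly_convex_on UNIV (min lam2 lam3) (GM lam1 lam2 lam3)"
      using GM_strongly_convex \<open>0 \<le> lam1\<close> .
    show "0 < min lam2 lam3" using assms by simp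
    show "TM n x y \<delta> lam1 lam2 lam3 L' V \<in> UsetM" if "0 < L'" for L' V
      using T[OF that] ..
    show "prox_model (gradM n x y \<delta>) (GM lam1 lam2 lam3) L' V (TM n x y \<delta> lam1 lam2 lam3 L' V)
        \<le> prox_model (gradM n x y \<delta>) (GM lam1 lam2 lam3) L' V Z" if "0 < L'" "Z \<in> UsetM" for L' V Z
      using T[OF that(1)] that(2) by blast
  qed
  show ?thesis by (rule pgh_run_R_linear_convergence[OF assms(5-7) _ run]) simp
qed

theorem corollary1:
  shows
  "(\<forall>(n::nat) (x::nat \<Rightarrow> real^'p) (y::nat \<Rightarrow> real) lam1 lam2 lam3 \<delta> \<eta>
       (L::nat \<Rightarrow> real) (u::nat \<Rightarrow> real \<times> (real^'p)).
      0 < n \<longrightarrow> (\<forall>i<n. y i = 1 \<or> y i = -1) \<longrightarrow>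
      0 \<le> lam1 \<longrightarrow> 0 < lam2 \<longrightarrow> 0 < lam3 \<longrightarrow> 0 < \<delta> \<longrightarrow>
      1 < \<eta> \<longrightarrow> 0 < L 0 \<longrightarrow> L 0 \<le> LfB n x y \<delta> \<longrightarrow>
      pgh_run (fB n x y \<delta>) (gradfB n x y \<delta>) (\<lambda>v. fB n x y \<delta> v + gB lam1 lam2 lam3 v)
              (TcB n x y \<delta> lam1 lam2 lam3) (TuB n x y \<delta> lam1 lam2 lam3) \<eta> (LfB n x y \<delta>) L u \<longrightarrow>
      (\<exists>us. (\<forall>v. fB n x y \<delta> us + gB lam1 lam2 lam3 us \<le> fB n x y \<delta> v + gB lam1 lam2 lam3 v) \<and>
            (\<forall>v. (\<forall>z. fB n x y \<delta> v + gB lam1 lam2 lam3 v \<le> fB n x y \<delta> z + gB lam1 lam2 lam3 z) \<longrightarrow> v = us) \<and>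
            (\<exists>C \<tau>. 0 < C \<and> 0 < \<tau> \<and> \<tau> < 1 \<and> (\<forall>k. norm (u k - us) \<le> C * \<tau> ^ k))))
   \<and>
   (\<forall>(n::nat) (x::nat \<Rightarrow> real^'p) (y::nat \<Rightarrow> 'j::finite) lam1 lam2 lam3 \<delta> \<eta>
       (L::nat \<Rightarrow> real) (U::nat \<Rightarrow> (real^'j) \<times> (real^'j^'p)).
      0 < n \<longrightarrow>
      0 \<le> lam1 \<longrightarrow> 0 < lam2 \<longrightarrow> 0 < lam3 \<longrightarrow> 0 < \<delta> \<longrightarrow>
      1 < \<eta> \<longrightarrow> 0 < L 0 \<longrightarrow> L 0 \<le> LmM n x \<delta> CARD('j) \<longrightarrow>
      pgh_run (ellM n x y \<delta>) (gradM n x y \<delta>) (\<lambda>V. ellM n x y \<delta> V + GM lam1 lam2 lam3 V)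
              (TM n x y \<delta> lam1 lam2 lam3) (TM n x y \<delta> lam1 lam2 lam3) \<eta> (LmM n x \<delta> CARD('j)) L U \<longrightarrow>
      (\<exists>Us\<in>UsetM. (\<forall>V\<in>UsetM. ellM n x y \<delta> Us + GM lam1 lam2 lam3 Us \<le> ellM n x y \<delta> V + GM lam1 lam2 lam3 V) \<and>
            (\<forall>V\<in>UsetM. (\<forall>Z\<in>UsetM. ellM n x y \<delta> V + GM lam1 lam2 lam3 V \<le> ellM n x y \<delta> Z + GM lam1 lam2 lam3 Z)
                 \<longrightarrow> V = Us) \<and>
            (\<exists>C \<tau>. 0 < C \<and> 0 < \<tau> \<and> \<tau> < 1 \<and> (\<forall>k. norm (U k - Us) \<le> C * \<tau> ^ k))))"
  by (intro conjI allI impI binary_case multiclass_case) assumption+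

end
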